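(* Let $T$ be a bounded, linear, self-adjoint operator on $L^2(G,\mathbb{C}^{s\times r})$ that is adjointable with respect to the matrix-valued inner product, and let $\{E_k\}_{k\in\mathbb{N}}$ be a matrix-valued orthonormal basis for $L^2(G,\mathbb{C}^{s\times r})$. Then $$\Big\{\big(I+\tfrac12\big((T^2)^{1/2}+T\big)\big)E_k\Big\}_{k\in\mathbb{N}}\quad\text{and}\quad\Big\{\big(I+\tfrac12\big((T^2)^{1/2}-T\big)\big)E_k\Big\}_{k\in\mathbb{N}}$$ are matrix-valued Riesz bases for $L^2(G,\mathbb{C}^{s\times r})$, where $I$ is the identity operator.
   Context: $G$ is a locally compact abelian group that is metrizable and $\sigma$-compact, with Haar measure $\mu_G$; $s,r\in\mathbb{N}$. $L^2(G,\mathbb{C}^{s\times r})$ is the space of $s\times r$ matrices with all entries in $L^2(G)$. The matrix-valued inner product is $\langle \mathbf{f},\mathbf{g}\rangle=\int_G \mathbf{f}(x)\mathbf{g}^*(x)\,d\mu_G\in M_s(\mathbb{C})$ (entrywise integral). $L^2(G,\mathbb{C}^{s\times r})$ is a Hilbert space with inner product $\langle \mathbf{f},\mathbf{g}\rangle_{L^2}=\mathrm{tr}\langle \mathbf{f},\mathbf{g}\rangle$ and Frobenius norm; $U^*$ denotes the Hilbert-adjoint with respect to this inner product, and self-adjoint means $T^*=T$. $U$ is adjointable with respect to the matrix-valued inner product if $\langle U\mathbf{f},\mathbf{g}\rangle=\langle\mathbf{f},U^*\mathbf{g}\rangle$ for all $\mathbf{f},\mathbf{g}$. For a positive operator $P$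 ($P^*=P$, $\mathrm{tr}\langle P\mathbf{f},\mathbf{f}\rangle\ge0$ for all $\mathbf{f}$), $P^{1/2}$ is the unique bounded positive operator whose square is $P$. A matrix-valued orthonormal basis is a sequence $\{E_k\}_{k\in\mathbb{N}}$ with $\langle E_k,E_j\rangle=\mathbf{I}_{s\times s}$ if $k=j$ and $\mathbf{O}_{s\times s}$ otherwise, such that $\mathbf{f}=\sum_k\langle\mathbf{f},E_k\rangle E_k$ in Frobenius norm for all $\mathbf{f}$. A matrix-valued Riesz basis is a family $\{VE_k\}_{k\in\mathbb{N}}$ with $\{E_k\}$ a matrix-valued orthonormal basis and $V$ bounded, linear, bijective and adjointable with respect to the matrix-valued inner product. *)

theory Defs
  imports "HOL-Analysis.Analysis"
begin

text \<open>A Haar measure on a locally compact abelian group whose topology is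
  metrizable and sigma-compact: a nonzero translation-invariant Borel measure
  that is finite on compact sets and positive on nonempty open sets (in this
  metrizable sigma-compact setting such measures are automatically Radon).\<close>

definition sigma_compact_group :: "'g::{topological_ab_group_add,t2_space} itself \<Rightarrow> bool" where
  "sigma_compact_group _ \<longleftrightarrow>
     locally_compact_space (euclidean :: 'g topology) \<and>
     metrizable_space (euclidean :: 'g topology) \<and>
     (\<exists>K :: nat \<Rightarrow> 'g set. (\<forall>n. compact (K n)) \<and> (\<Union>n. K n) = UNIV)"

definition haar_measure :: "'g::{topological_ab_group_add,t2_space} measure \<Rightarrow> bool" where
  "haar_measure M \<longleftrightarrow>
     sets M = sets borel \<and> space M = UNIV \<and>
     (\<forall>A\<in>sets borel. \<forall>a. emeasure M ((+) a ` A) = emeasure M A) \<and>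
     (\<forall>K. compact K \<longrightarrow> emeasure M K < \<infinity>) \<and>
     (\<forall>U. open U \<and> U \<noteq> {} \<longrightarrow> 0 < emeasure M U)"

definition mscale :: "complex \<Rightarrow> complex^'r^'s \<Rightarrow> complex^'r^'s" where
  "mscale c A = (\<chi> i j. c * A $ i $ j)"

definition ctrans :: "complex^'r^'s \<Rightarrow> complex^'s^'r" where
  "ctrans A = (\<chi> j i. cnj (A $ i $ j))"

definition mtrace :: "complex^'s^'s \<Rightarrow> complex" where
  "mtrace A = (\<Sum>i\<in>UNIV. A $ i $ i)"

text \<open>Elements are represented by functions G -> C^(s x r); equality in L^2
  is equality almost everywhere (aeq).\<close>

definition L2 :: "'g measure \<Rightarrow> ('g \<Rightarrow> complex^'r^'s) set" where
  "L2 M = {f. \<forall>i j. (\<lambda>x. f x $ i $ j) \<in> borel_measurable M \<and>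
                     integrable M (\<lambda>x. (cmod (f x $ i $ j))\<^sup>2)}"

definition aeq :: "'g measure \<Rightarrow> ('g \<Rightarrow> complex^'r^'s) \<Rightarrow> ('g \<Rightarrow> complex^'r^'s) \<Rightarrow> bool" where
  "aeq M f g \<longleftrightarrow> (AE x in M. f x = g x)"

definition minner :: "'g measure \<Rightarrow> ('g \<Rightarrow> complex^'r^'s) \<Rightarrow> ('g \<Rightarrow> complex^'r^'s) \<Rightarrow> complex^'s^'s" where
  "minner M f g = (\<chi> i k. LINT x|M. (f x ** ctrans (g x)) $ i $ k)"

definition hinner :: "'g measure \<Rightarrow> ('g \<Rightarrow> complex^'r^'s) \<Rightarrow> ('g \<Rightarrow> complex^'r^'s) \<Rightarrow> complex" where
  "hinner M f g = mtrace (minner M f g)"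

definition l2norm :: "'g measure \<Rightarrow> ('g \<Rightarrow> complex^'r^'s) \<Rightarrow> real" where
  "l2norm M f = sqrt (Re (hinner M f f))"

type_synonym ('g,'r,'s) op = "('g \<Rightarrow> complex^'r::finite^'s::finite) \<Rightarrow> ('g \<Rightarrow> complex^'r^'s)"

definition bounded_op :: "'g measure \<Rightarrow> (('g \<Rightarrow> complex^'r::finite^'s::finite) \<Rightarrow> ('g \<Rightarrow> complex^'r^'s)) \<Rightarrow> bool" where
  "bounded_op M T \<longleftrightarrow>
     (\<forall>f\<in>L2 M. T f \<in> L2 M) \<and>
     (\<forall>f\<in>L2 M. \<forall>g\<in>L2 M. aeq M f g \<longrightarrow> aeq M (T f) (T g)) \<and>
     (\<forall>a b. \<forall>f\<in>L2 M. \<forall>g\<in>L2 M.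
        aeq M (T (\<lambda>x. mscale a (f x) + mscale b (g x)))
              (\<lambda>x. mscale a (T f x) + mscale b (T g x))) \<and>
     (\<exists>C. \<forall>f\<in>L2 M. l2norm M (T f) \<le> C * l2norm M f)"

definition is_hadjoint :: "'g measure \<Rightarrow> (('g \<Rightarrow> complex^'r::finite^'s::finite) \<Rightarrow> ('g \<Rightarrow> complex^'r^'s)) \<Rightarrow> ('g,'r,'s) op \<Rightarrow> bool" where
  "is_hadjoint M T S \<longleftrightarrow> bounded_op M T \<and> bounded_op M S \<and>
     (\<forall>f\<in>L2 M. \<forall>g\<in>L2 M. hinner M (T f) g = hinner M f (S g))"

definition self_adjoint_op :: "'g measure \<Rightarrow> (('g \<Rightarrow> complex^'r::finite^'s::finite) \<Rightarrow> ('g \<Rightarrow> complex^'r^'s)) \<Rightarrow> bool" where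
  "self_adjoint_op M T \<longleftrightarrow> is_hadjoint M T T"

definition mat_adjointable :: "'g measure \<Rightarrow> (('g \<Rightarrow> complex^'r::finite^'s::finite) \<Rightarrow> ('g \<Rightarrow> complex^'r^'s)) \<Rightarrow> bool" where
  "mat_adjointable M U \<longleftrightarrow> (\<exists>S. is_hadjoint M U S \<and>
     (\<forall>f\<in>L2 M. \<forall>g\<in>L2 M. minner M (U f) g = minner M f (S g)))"

definition positive_op :: "'g measure \<Rightarrow> (('g \<Rightarrow> complex^'r::finite^'s::finite) \<Rightarrow> ('g \<Rightarrow> complex^'r^'s)) \<Rightarrow> bool" where
  "positive_op M P \<longleftrightarrow> self_adjoint_op M P \<and>
     (\<forall>f\<in>L2 M. Im (hinner M (P f) f) = 0 \<and> 0 \<le> Re (hinner M (P f) f))"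

definition is_op_sqrt :: "'g measure \<Rightarrow> (('g \<Rightarrow> complex^'r::finite^'s::finite) \<Rightarrow> ('g \<Rightarrow> complex^'r^'s)) \<Rightarrow> ('g,'r,'s) op \<Rightarrow> bool" where
  "is_op_sqrt M P S \<longleftrightarrow> positive_op M S \<and> (\<forall>f\<in>L2 M. aeq M (S (S f)) (P f))"

text \<open>P^(1/2): the (unique up to a.e. equality) positive square root.\<close>
definition op_sqrt :: "'g measure \<Rightarrow> (('g \<Rightarrow> complex^'r::finite^'s::finite) \<Rightarrow> ('g \<Rightarrow> complex^'r^'s)) \<Rightarrow> ('g,'r,'s) op" where
  "op_sqrt M P = (SOME S. is_op_sqrt M P S)"

definition bij_op :: "'g measure \<Rightarrow> (('g \<Rightarrow> complex^'r::finite^'s::finite) \<Rightarrow> ('g \<Rightarrow> complex^'r^'s)) \<Rightarrow> bool" where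
  "bij_op M V \<longleftrightarrow>
     (\<forall>f\<in>L2 M. \<forall>g\<in>L2 M. aeq M (V f) (V g) \<longrightarrow> aeq M f g) \<and>
     (\<forall>g\<in>L2 M. \<exists>f\<in>L2 M. aeq M (V f) g)"

definition mat_onb :: "'g measure \<Rightarrow> (nat \<Rightarrow> 'g \<Rightarrow> complex^'r^'s) \<Rightarrow> bool" where
  "mat_onb M E \<longleftrightarrow>
     (\<forall>k. E k \<in> L2 M) \<and>
     (\<forall>k j. minner M (E k) (E j) = (if k = j then mat 1 else 0)) \<and>
     (\<forall>f\<in>L2 M. (\<lambda>n. l2norm M (\<lambda>x. f x - (\<Sum>k<n. minner M f (E k) ** E k x)))
                   \<longlonglongrightarrow> 0)"

definition mat_riesz_basis :: "'g measure \<Rightarrow> (nat \<Rightarrow> 'g \<Rightarrow> complex^'r^'s) \<Rightarrow> bool" where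
  "mat_riesz_basis M F \<longleftrightarrow> (\<exists>E V. mat_onb M E \<and> bounded_op M V \<and> bij_op M V \<and>
     mat_adjointable M V \<and> (\<forall>k. aeq M (F k) (V (E k))))"

end

(*
  The coefficient map f |-> (<f, E k>)_k is an isometry of L2(G, C^(s x r)) onto the real Hilbert
  space of square-summable sequences of s x s matrices (Parseval for the isometry, Riesz-Fischer
  for surjectivity), and it turns left multiplication of f by a matrix A into coordinatewise left
  multiplication by A.  Matrix-adjointability of T says exactly that T commutes with these
  multiplications, so T becomes a self-adjoint operator T' on the sequence space commuting with
  them.  The binomial series of sqrt (1 - X) yields a positive square root of T'^2 that commutes
  with everything commuting with T'^2; positive square roots of T'^2 are unique, so the operator
  S' corresponding to (T^2)^(1/2) is this one, and S' commutes with T' and with all matrix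
  multiplications.  Hence (1 + (S' + T')/2) (1 + (S' - T')/2) = 1 + S' in either order, and 1 + S'
  is invertible by a Neumann series since S' is positive.  Both factors are therefore invertible,
  self-adjoint and commute with matrix multiplication; transported back to L2 they are bounded,
  bijective and matrix-adjointable, so they map (E k) to matrix-valued Riesz bases.
*)

theory Submission
  imports Defs "HOL-Computational_Algebra.Formal_Power_Series"
begin

section \<open>Bounded operators as a Banach algebra\<close>

text \<open>A copy of \<open>'a \<Rightarrow>\<^sub>L 'a\<close>: a type class cannot be instantiated on that type, since its two
  arguments coincide, so composition becomes the ring multiplication of this copy instead.\<close>

typedef (overloaded) 'a endo = "UNIV :: ('a::real_normed_vector \<Rightarrow>\<^sub>L 'a) set"
  morphisms blinfun_of_endo Endo ..

setup_lifting type_definition_endo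

instantiation endo :: (real_normed_vector) real_normed_vector
begin
lift_definition norm_endo :: "'a endo \<Rightarrow> real" is norm .
lift_definition zero_endo :: "'a endo" is 0 .
lift_definition plus_endo :: "'a endo \<Rightarrow> 'a endo \<Rightarrow> 'a endo" is "(+)" .
lift_definition minus_endo :: "'a endo \<Rightarrow> 'a endo \<Rightarrow> 'a endo" is "(-)" .
lift_definition uminus_endo :: "'a endo \<Rightarrow> 'a endo" is uminus .
lift_definition scaleR_endo :: "real \<Rightarrow> 'a endo \<Rightarrow> 'a endo" is scaleR .
definition dist_endo :: "'a endo \<Rightarrow> 'a endo \<Rightarrow> real" where "dist_endo a b = norm (a - b)"
definition sgn_endo :: "'a endo \<Rightarrow> 'a endo" where "sgn_endo x = scaleR (inverse (norm x)) x"
definition uniformity_endo :: "('a endo \<times> 'a endo) filter" where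
  "uniformity_endo = (INF e\<in>{0 <..}. principal {(x, y). dist x y < e})"
definition open_endo :: "'a endo set \<Rightarrow> bool" where
  "open_endo S = (\<forall>x\<in>S. \<forall>\<^sub>F (x', y) in uniformity. x' = x \<longrightarrow> y \<in> S)"
instance
  by standard
    (unfold dist_endo_def open_endo_def sgn_endo_def uniformity_endo_def,
     (rule refl | (transfer, simp add: norm_triangle_ineq algebra_simps))+)
end

lemma norm_blinfun_of_endo: "norm (blinfun_of_endo A) = norm A"
  by transfer simp

lemma blinfun_of_endo_diff: "blinfun_of_endo (A - B) = blinfun_of_endo A - blinfun_of_endo B"
  by transfer simp

instance endo :: (banach) banach
proof
  fix X :: "nat \<Rightarrow> 'a endo"
  assume "Cauchy X"
  then have "Cauchy (\<lambda>n. blinfun_of_endo (X n))"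
    unfolding Cauchy_def dist_norm
    by (simp add: blinfun_of_endo_diff[symmetric] norm_blinfun_of_endo)
  then obtain L where L: "(\<lambda>n. blinfun_of_endo (X n)) \<longlonglongrightarrow> L"
    using Cauchy_convergent_iff convergent_def by blast
  have "dist (X n) (Endo L) = dist (blinfun_of_endo (X n)) L" for n
    unfolding dist_norm
    by (simp add: norm_blinfun_of_endo[symmetric] blinfun_of_endo_diff Endo_inverse)
  with L have "X \<longlonglongrightarrow> Endo L"
    unfolding tendsto_iff by simp
  then show "convergent X"
    unfolding convergent_def by blast
qed

instantiation endo :: (real_normed_vector) "{ring, monoid_mult, real_normed_algebra}"
begin
lift_definition times_endo :: "'a endo \<Rightarrow> 'a endo \<Rightarrow> 'a endo" is blinfun_compose .
lift_definition one_endo :: "'a endo" is id_blinfun .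
instance
  by standard
    ((transfer, rule blinfun_eqI, simp add: blinfun.bilinear_simps)+,
     transfer, simp add: norm_blinfun_compose)
end

lift_definition endo_apply :: "'a::real_normed_vector endo \<Rightarrow> 'a \<Rightarrow> 'a" (infixr "$$" 90)
  is blinfun_apply .

lift_definition endo_of_fun :: "('a::real_normed_vector \<Rightarrow> 'a) \<Rightarrow> 'a endo" is Blinfun .

lemma endo_apply_simps [simp]:
  "(A * B) $$ x = A $$ (B $$ x)"
  "1 $$ x = x"
  "0 $$ x = 0"
  "(A + B) $$ x = A $$ x + B $$ x"
  "(A - B) $$ x = A $$ x - B $$ x"
  "(- A) $$ x = - (A $$ x)"
  "(r *\<^sub>R A) $$ x = r *\<^sub>R (A $$ x)"
  "A $$ (x + y) = A $$ x + A $$ y"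
  "A $$ (x - y) = A $$ x - A $$ y"
  "A $$ (r *\<^sub>R x) = r *\<^sub>R (A $$ x)"
  "A $$ 0 = 0"
  by (transfer, simp add: blinfun.bilinear_simps)+

lemma endo_apply_endo_of_fun: "bounded_linear f \<Longrightarrow> endo_of_fun f $$ x = f x"
  by transfer (simp add: bounded_linear_Blinfun_apply)

lemma norm_endo_apply: "norm (A $$ x) \<le> norm A * norm x"
  by transfer (rule norm_blinfun)

lemma norm_endo_bound: "0 \<le> b \<Longrightarrow> (\<And>x. norm (A $$ x) \<le> b * norm x) \<Longrightarrow> norm A \<le> b"
  by transfer (rule norm_blinfun_bound)

lemma endo_eqI: "(\<And>x. A $$ x = B $$ x) \<Longrightarrow> A = B"
  by transfer (rule blinfun_eqI)

lemma bounded_bilinear_endo_apply: "bounded_bilinear (\<lambda>A x. A $$ x)"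
  by (rule bounded_bilinear.intro) (auto intro!: exI[of _ 1] simp: norm_endo_apply)

section \<open>Positive operators and their square roots\<close>

definition sqrt_coeff :: "nat \<Rightarrow> real" where
  "sqrt_coeff n = (-1) ^ n * ((1/2) gchoose n)"

lemma sqrt_coeff_0 [simp]: "sqrt_coeff 0 = 1"
  and sqrt_coeff_1 [simp]: "sqrt_coeff (Suc 0) = - 1/2"
  by (simp_all add: sqrt_coeff_def)

lemma sqrt_coeff_Suc: "real (Suc n) * sqrt_coeff (Suc n) = (real n - 1/2) * sqrt_coeff n"
proof -
  have "fact (Suc n) * ((1/2::real) gchoose Suc n) = (\<Prod>i = 0..<Suc n. 1/2 - of_nat i)"
    by (rule gbinomial_mult_fact)
  also have "\<dots> = (\<Prod>i = 0..<n. 1/2 - of_nat i) * (1/2 - real n)"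
    by simp
  also have "(\<Prod>i = 0..<n. 1/2 - of_nat i) = fact n * ((1/2::real) gchoose n)"
    by (rule gbinomial_mult_fact[symmetric])
  finally have "fact n * (real (Suc n) * ((1/2::real) gchoose Suc n))
      = fact n * (((1/2) gchoose n) * (1/2 - real n))"
    by (simp only: fact_Suc of_nat_mult) (simp add: algebra_simps)
  then have "real (Suc n) * ((1/2::real) gchoose Suc n) = ((1/2) gchoose n) * (1/2 - real n)"
    by simp
  then have "- (real (Suc n) * ((1/2::real) gchoose Suc n)) = (real n - 1/2) * ((1/2) gchoose n)"
    by (simp add: algebra_simps)
  then have "(-1) ^ n * (- (real (Suc n) * ((1/2::real) gchoose Suc n)))
      = (-1) ^ n * ((real n - 1/2) * ((1/2) gchoose n))"
    by (simp only:)
  then show ?thesis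
    by (simp add: sqrt_coeff_def algebra_simps)
qed

lemma sqrt_coeff_nonpos: "n \<ge> 1 \<Longrightarrow> sqrt_coeff n \<le> 0"
proof (induction n rule: nat_induct_at_least)
  case (Suc n)
  have "real (Suc n) * sqrt_coeff (Suc n) \<le> 0"
    unfolding sqrt_coeff_Suc using Suc by (intro mult_nonneg_nonpos) auto
  then show ?case
    by (simp add: mult_le_0_iff)
qed simp

text \<open>Telescoping the recursion gives the partial sums
  \<open>\<Sum>n<N. - sqrt_coeff (Suc n) = 1 - 2 (N + 1) |sqrt_coeff (N + 1)|\<close>.\<close>

lemma sum_abs_sqrt_coeff_le: "(\<Sum>n<N. \<bar>sqrt_coeff (Suc n)\<bar>) \<le> 1"
proof -
  define b where "b n = - sqrt_coeff n" for n
  have b_nonneg: "n \<ge> 1 \<Longrightarrow> b n \<ge> 0" for n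
    using sqrt_coeff_nonpos by (simp add: b_def)
  have step: "real n * b n - real (Suc n) * b (Suc n) = b n / 2" for n
    using sqrt_coeff_Suc[of n] by (simp add: b_def algebra_simps)
  have "(\<Sum>n<N. b (Suc n)) = 2 * (b 1 - real (Suc N) * b (Suc N))"
  proof (induction N)
    case (Suc N)
    then show ?case
      using step[of "Suc N"] by (simp add: algebra_simps)
  qed simp
  also have "\<dots> \<le> 1"
    using b_nonneg[of "Suc N"] by (simp add: b_def mult_nonpos_nonneg)
  finally show ?thesis
    using sqrt_coeff_nonpos by (simp add: b_def abs_of_nonpos)
qed

lemma summable_abs_sqrt_coeff_Suc: "summable (\<lambda>n. \<bar>sqrt_coeff (Suc n)\<bar>)"
  by (rule summableI_nonneg_bounded[where x = 1]) (use sum_abs_sqrt_coeff_le in auto)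

lemma summable_abs_sqrt_coeff: "summable (\<lambda>n. \<bar>sqrt_coeff n\<bar>)"
  using summable_abs_sqrt_coeff_Suc summable_Suc_iff by blast

lemma suminf_abs_sqrt_coeff_Suc_le: "(\<Sum>n. \<bar>sqrt_coeff (Suc n)\<bar>) \<le> 1"
  by (rule suminf_le_const[OF summable_abs_sqrt_coeff_Suc]) (use sum_abs_sqrt_coeff_le in auto)

text \<open>The Cauchy square of \<open>\<Sum> sqrt_coeff n x\<^sup>n = \<surd>(1 - x)\<close> is \<open>1 - x\<close> (Vandermonde).\<close>

lemma sqrt_coeff_convolution:
  "(\<Sum>k\<le>n. sqrt_coeff k * sqrt_coeff (n - k)) = (if n = 0 then 1 else if n = 1 then -1 else 0)"
proof -
  have "(\<Sum>k\<le>n. sqrt_coeff k * sqrt_coeff (n - k))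
      = (-1) ^ n * (\<Sum>k\<le>n. ((1/2::real) gchoose k) * ((1/2) gchoose (n - k)))"
    unfolding sqrt_coeff_def sum_distrib_left
    by (intro sum.cong refl) (auto simp: power_add[symmetric])
  also have "(\<Sum>k\<le>n. ((1/2::real) gchoose k) * ((1/2) gchoose (n - k))) = (1::real) gchoose n"
    using gbinomial_Vandermonde[of "1/2::real" "1/2" n] by (simp add: atMost_atLeast0)
  also have "(1::real) gchoose n = of_nat (1 choose n)"
    by (simp add: binomial_gbinomial)
  finally show ?thesis
    by (cases n) (auto simp: binomial_eq_0)
qed

definition endo_selfadjoint :: "'h::{real_inner,banach} endo \<Rightarrow> bool" where
  "endo_selfadjoint A \<longleftrightarrow> (\<forall>x y. inner (A $$ x) y = inner x (A $$ y))"

definition endo_positive :: "'h::{real_inner,banach} endo \<Rightarrow> bool" where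
  "endo_positive A \<longleftrightarrow> endo_selfadjoint A \<and> (\<forall>x. 0 \<le> inner (A $$ x) x)"

definition endo_invertible :: "'h::{real_inner,banach} endo \<Rightarrow> bool" where
  "endo_invertible A \<longleftrightarrow> (\<exists>B. A * B = 1 \<and> B * A = 1)"

lemma endo_selfadjoint_one: "endo_selfadjoint 1"
  and endo_selfadjoint_add: "endo_selfadjoint A \<Longrightarrow> endo_selfadjoint B \<Longrightarrow> endo_selfadjoint (A + B)"
  and endo_selfadjoint_diff: "endo_selfadjoint A \<Longrightarrow> endo_selfadjoint B \<Longrightarrow> endo_selfadjoint (A - B)"
  and endo_selfadjoint_scaleR: "endo_selfadjoint A \<Longrightarrow> endo_selfadjoint (r *\<^sub>R A)"
  by (simp_all add: endo_selfadjoint_def inner_add_left inner_add_right inner_diff_left inner_diff_right)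

lemma endo_selfadjoint_mult_commute:
  "endo_selfadjoint A \<Longrightarrow> endo_selfadjoint B \<Longrightarrow> A * B = B * A \<Longrightarrow> endo_selfadjoint (A * B)"
  unfolding endo_selfadjoint_def by (metis endo_apply_simps(1))

lemma endo_selfadjoint_power: "endo_selfadjoint A \<Longrightarrow> endo_selfadjoint (A ^ n)"
  by (induction n) (auto simp: endo_selfadjoint_one power_commutes intro!: endo_selfadjoint_mult_commute)

lemma endo_selfadjoint_suminf:
  fixes F :: "nat \<Rightarrow> 'h::{real_inner,banach} endo"
  assumes "summable F" "\<And>n. endo_selfadjoint (F n)"
  shows "endo_selfadjoint (suminf F)"
  unfolding endo_selfadjoint_def
proof (intro allI)
  fix x y :: 'h
  have lin: "bounded_linear (\<lambda>A. inner (A $$ x) y)" "bounded_linear (\<lambda>A. inner x (A $$ y))"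
    by (auto intro: bounded_linear_compose[OF bounded_linear_inner_left]
        bounded_linear_compose[OF bounded_linear_inner_right]
        bounded_bilinear.bounded_linear_left[OF bounded_bilinear_endo_apply])
  have "inner (suminf F $$ x) y = (\<Sum>n. inner (F n $$ x) y)"
    using bounded_linear.suminf[OF lin(1) assms(1)] by simp
  also have "\<dots> = (\<Sum>n. inner x (F n $$ y))"
    using assms(2) by (simp add: endo_selfadjoint_def)
  also have "\<dots> = inner x (suminf F $$ y)"
    using bounded_linear.suminf[OF lin(2) assms(1)] by simp
  finally show "inner (suminf F $$ x) y = inner x (suminf F $$ y)" .
qed

lemma quadratic_nonneg_discriminant:
  fixes a b c :: real
  assumes "0 \<le> c" and nonneg: "\<And>t. 0 \<le> a + 2 * t * b + t\<^sup>2 * c"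
  shows "b\<^sup>2 \<le> a * c"
proof (cases "c = 0")
  case True
  have "b = 0"
  proof (rule ccontr)
    assume "b \<noteq> 0"
    then have "a + 2 * (- (a + 1) / (2 * b)) * b + (- (a + 1) / (2 * b))\<^sup>2 * c = -1"
      using True by (simp add: field_simps)
    with nonneg show False
      by (metis neg_0_le_iff_le not_one_le_zero)
  qed
  then show ?thesis
    using True by simp
next
  case False
  with \<open>0 \<le> c\<close> have "c > 0"
    by simp
  have "0 \<le> a + 2 * (- b / c) * b + (- b / c)\<^sup>2 * c"
    by (rule nonneg)
  also have "\<dots> = a - b\<^sup>2 / c"
    using \<open>c > 0\<close> by (simp add: field_simps power2_eq_square)
  finally show ?thesis
    using \<open>c > 0\<close> by (simp add: field_simps)
qed

lemma endo_positive_Cauchy_Schwarz: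
  assumes "endo_positive A"
  shows "(inner (A $$ x) y)\<^sup>2 \<le> inner (A $$ x) x * inner (A $$ y) y"
proof (rule quadratic_nonneg_discriminant)
  show "0 \<le> inner (A $$ y) y"
    using assms by (simp add: endo_positive_def)
  fix t
  have sym: "inner (A $$ y) x = inner (A $$ x) y"
    using assms by (simp add: endo_positive_def endo_selfadjoint_def inner_commute)
  have "0 \<le> inner (A $$ (x + t *\<^sub>R y)) (x + t *\<^sub>R y)"
    using assms unfolding endo_positive_def by blast
  also have "\<dots> = inner (A $$ x) x + 2 * t * inner (A $$ x) y + t\<^sup>2 * inner (A $$ y) y"
    by (simp add: inner_add_left inner_add_right sym power2_eq_square algebra_simps)
  finally show "0 \<le> inner (A $$ x) x + 2 * t * inner (A $$ x) y + t\<^sup>2 * inner (A $$ y) y" .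
qed

lemma endo_positive_apply_eq_0:
  assumes "endo_positive A" "inner (A $$ x) x = 0"
  shows "A $$ x = 0"
  using endo_positive_Cauchy_Schwarz[OF assms(1), of x "A $$ x"] assms(2) by simp

lemma norm_endo_positive_le:
  assumes "endo_positive A" "0 \<le> q" and le: "\<And>x. inner (A $$ x) x \<le> q * (norm x)\<^sup>2"
  shows "norm A \<le> q"
proof (rule norm_endo_bound[OF \<open>0 \<le> q\<close>])
  fix x
  let ?y = "A $$ x"
  have "(norm ?y)\<^sup>2 * (norm ?y)\<^sup>2 = (inner ?y ?y)\<^sup>2"
    by (simp add: power2_norm_eq_inner[symmetric] power2_eq_square)
  also have "\<dots> \<le> inner (A $$ x) x * inner (A $$ ?y) ?y"
    by (rule endo_positive_Cauchy_Schwarz[OF assms(1)])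
  also have "\<dots> \<le> (q * (norm x)\<^sup>2) * (q * (norm ?y)\<^sup>2)"
    using assms(1,2) by (intro mult_mono le) (auto simp: endo_positive_def)
  also have "\<dots> = (q * norm x)\<^sup>2 * (norm ?y)\<^sup>2"
    by (simp add: power2_eq_square algebra_simps)
  finally have "(norm ?y)\<^sup>2 \<le> (q * norm x)\<^sup>2 \<or> ?y = 0"
    using mult_right_le_imp_le[of "(norm ?y)\<^sup>2" "(norm ?y)\<^sup>2" "(q * norm x)\<^sup>2"] by fastforce
  then show "norm ?y \<le> q * norm x"
    using \<open>0 \<le> q\<close> by (auto simp: power2_le_iff_abs_le)
qed

lemma inner_endo_apply_le: "\<bar>inner (A $$ x) x\<bar> \<le> norm A * (norm x)\<^sup>2"
proof -
  have "\<bar>inner (A $$ x) x\<bar> \<le> norm (A $$ x) * norm x"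
    by (rule Cauchy_Schwarz_ineq2)
  also have "\<dots> \<le> norm A * norm x * norm x"
    by (rule mult_right_mono[OF norm_endo_apply]) simp
  finally show ?thesis
    by (simp add: power2_eq_square mult.assoc)
qed

lemma norm_power_endo: "norm ((Y :: 'a::real_normed_vector endo) ^ n) \<le> norm Y ^ n"
proof (induction n)
  case 0
  show ?case
    by (simp add: norm_endo_bound)
next
  case (Suc n)
  have "norm (Y ^ Suc n) \<le> norm Y * norm (Y ^ n)"
    by (simp add: norm_mult_ineq)
  also have "\<dots> \<le> norm Y * norm Y ^ n"
    by (rule mult_left_mono[OF Suc]) simp
  finally show ?case
    by simp
qed

lemma Neumann_series:
  fixes Y :: "'a::banach endo"
  assumes "norm Y < 1"
  shows "(1 - Y) * (\<Sum>n. Y ^ n) = 1" "(\<Sum>n. Y ^ n) * (1 - Y) = 1"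
proof -
  have "summable (\<lambda>n. norm (Y ^ n))"
    by (rule summable_comparison_test[OF _ summable_geometric[of "norm Y"]])
      (use assms norm_power_endo in auto)
  then have sums: "summable (\<lambda>n. Y ^ n)"
    by (rule summable_norm_cancel)
  have "(\<lambda>n. norm Y ^ n) \<longlonglongrightarrow> 0"
    using assms by (simp add: LIMSEQ_realpow_zero)
  then have "(\<lambda>n. Y ^ n) \<longlonglongrightarrow> 0"
    by (rule Lim_null_comparison[rotated]) (auto simp: norm_power_endo)
  then have telescope: "(\<Sum>n. Y ^ n - Y ^ Suc n) = 1"
    using telescope_sums'[of "\<lambda>n. Y ^ n"] sums_unique by fastforce
  have "(1 - Y) * (\<Sum>n. Y ^ n) = (\<Sum>n. (1 - Y) * Y ^ n)"
    by (rule suminf_mult[OF sums, symmetric])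
  also have "\<dots> = 1"
    using telescope by (simp add: algebra_simps)
  finally show "(1 - Y) * (\<Sum>n. Y ^ n) = 1" .
  have "(\<Sum>n. Y ^ n) * (1 - Y) = (\<Sum>n. Y ^ n * (1 - Y))"
    by (rule suminf_mult2[OF sums])
  also have "\<dots> = 1"
    using telescope by (simp add: algebra_simps power_commutes)
  finally show "(\<Sum>n. Y ^ n) * (1 - Y) = 1" .
qed

definition sqrt_one_minus :: "'h::{real_inner,banach} endo \<Rightarrow> 'h endo" where
  "sqrt_one_minus X = (\<Sum>n. sqrt_coeff n *\<^sub>R X ^ n)"

lemma summable_norm_sqrt_one_minus:
  fixes X :: "'h::{real_inner,banach} endo"
  assumes "norm X \<le> 1"
  shows "summable (\<lambda>n. norm (sqrt_coeff n *\<^sub>R X ^ n))"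
proof (rule summable_comparison_test[OF _ summable_abs_sqrt_coeff])
  have "norm (X ^ n) \<le> 1" for n
    using norm_power_endo[of X n] assms by (meson order_trans power_le_one norm_ge_zero)
  then show "\<exists>N. \<forall>n\<ge>N. norm (norm (sqrt_coeff n *\<^sub>R X ^ n)) \<le> \<bar>sqrt_coeff n\<bar>"
    by (auto simp: mult_left_le)
qed

lemma sqrt_one_minus_square:
  fixes X :: "'h::{real_inner,banach} endo"
  assumes "norm X \<le> 1"
  shows "sqrt_one_minus X * sqrt_one_minus X = 1 - X"
proof -
  let ?a = "\<lambda>n. sqrt_coeff n *\<^sub>R X ^ n"
  let ?d = "\<lambda>n::nat. if n = 0 then 1 else if n = 1 then -1 else (0::real)"
  have "sqrt_one_minus X * sqrt_one_minus X = (\<Sum>n. \<Sum>i\<le>n. ?a i * ?a (n - i))"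
    unfolding sqrt_one_minus_def
    using summable_norm_sqrt_one_minus[OF assms] summable_norm_sqrt_one_minus[OF assms]
    by (rule Cauchy_product)
  also have "\<dots> = (\<Sum>n. ?d n *\<^sub>R X ^ n)"
  proof (rule suminf_cong)
    fix n
    have "(\<Sum>i\<le>n. ?a i * ?a (n - i)) = (\<Sum>i\<le>n. sqrt_coeff i * sqrt_coeff (n - i)) *\<^sub>R X ^ n"
      by (auto simp: scaleR_sum_left power_add[symmetric] intro!: sum.cong)
    then show "(\<Sum>i\<le>n. ?a i * ?a (n - i)) = ?d n *\<^sub>R X ^ n"
      by (simp add: sqrt_coeff_convolution)
  qed
  also have "\<dots> = (\<Sum>n\<in>{0, 1}. ?d n *\<^sub>R X ^ n)"
    by (rule suminf_finite) auto
  also have "\<dots> = 1 - X"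
    by simp
  finally show ?thesis .
qed

lemma endo_positive_sqrt_one_minus:
  fixes X :: "'h::{real_inner,banach} endo"
  assumes "endo_selfadjoint X" "norm X \<le> 1"
  shows "endo_positive (sqrt_one_minus X)"
  unfolding endo_positive_def
proof (intro conjI allI)
  let ?a = "\<lambda>n. sqrt_coeff n *\<^sub>R X ^ n"
  have sum_a: "summable ?a"
    by (rule summable_norm_cancel[OF summable_norm_sqrt_one_minus[OF assms(2)]])
  then show "endo_selfadjoint (sqrt_one_minus X)"
    unfolding sqrt_one_minus_def
    by (rule endo_selfadjoint_suminf) (simp add: endo_selfadjoint_scaleR endo_selfadjoint_power assms(1))
  fix x
  define f where "f n = inner (?a n $$ x) x" for n
  have lin: "bounded_linear (\<lambda>A. inner (A $$ x) x)"
    by (rule bounded_linear_compose[OF bounded_linear_inner_left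
          bounded_bilinear.bounded_linear_left[OF bounded_bilinear_endo_apply]])
  have sum_f: "summable f"
    unfolding f_def by (rule bounded_linear.summable[OF lin sum_a])
  have "inner (sqrt_one_minus X $$ x) x = suminf f"
    unfolding sqrt_one_minus_def f_def using bounded_linear.suminf[OF lin sum_a] by simp
  also have "suminf f = (\<Sum>n. f (Suc n)) + (norm x)\<^sup>2"
    using suminf_split_head[OF sum_f] by (simp add: f_def power2_norm_eq_inner)
  finally have P_eq: "inner (sqrt_one_minus X $$ x) x = (\<Sum>n. f (Suc n)) + (norm x)\<^sup>2" .
  have "\<bar>f n\<bar> \<le> \<bar>sqrt_coeff n\<bar> * (norm x)\<^sup>2" for n
  proof -
    have "\<bar>f n\<bar> \<le> norm (?a n) * (norm x)\<^sup>2"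
      unfolding f_def by (rule inner_endo_apply_le)
    also have "\<dots> \<le> \<bar>sqrt_coeff n\<bar> * (norm x)\<^sup>2"
      proof (rule mult_right_mono)
      have "norm (X ^ n) \<le> 1"
        using norm_power_endo[of X n] assms(2) by (meson order_trans power_le_one norm_ge_zero)
      then show "norm (?a n) \<le> \<bar>sqrt_coeff n\<bar>"
        by (simp add: mult_left_le)
    qed simp
    finally show ?thesis .
  qed
  then have "- (\<bar>sqrt_coeff (Suc n)\<bar> * (norm x)\<^sup>2) \<le> f (Suc n)" for n
    by (smt (verit))
  then have "(\<Sum>n. - (\<bar>sqrt_coeff (Suc n)\<bar> * (norm x)\<^sup>2)) \<le> (\<Sum>n. f (Suc n))"
    using summable_abs_sqrt_coeff_Suc sum_f
    by (intro suminf_le) (auto simp: summable_Suc_iff intro!: summable_minus summable_mult2)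
  moreover have "(\<Sum>n. \<bar>sqrt_coeff (Suc n)\<bar> * (norm x)\<^sup>2) \<le> (norm x)\<^sup>2"
    using suminf_abs_sqrt_coeff_Suc_le summable_abs_sqrt_coeff_Suc
    by (subst suminf_mult2[symmetric]) (auto intro!: mult_left_le_one_le suminf_nonneg)
  moreover have "summable (\<lambda>n. \<bar>sqrt_coeff (Suc n)\<bar> * (norm x)\<^sup>2)"
    using summable_abs_sqrt_coeff_Suc by (rule summable_mult2)
  ultimately show "0 \<le> inner (sqrt_one_minus X $$ x) x"
    unfolding P_eq by (simp add: suminf_minus)
qed

lemma sqrt_one_minus_commute:
  fixes X :: "'h::{real_inner,banach} endo"
  assumes "norm X \<le> 1" "U * X = X * U"
  shows "U * sqrt_one_minus X = sqrt_one_minus X * U"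
proof -
  have "U * X ^ n = X ^ n * U" for n
  proof (induction n)
    case (Suc n)
    have "U * X ^ Suc n = (U * X) * X ^ n"
      by (simp add: mult.assoc)
    also have "\<dots> = X * (U * X ^ n)"
      by (simp add: assms(2) mult.assoc)
    finally show ?case
      by (simp add: Suc mult.assoc)
  qed simp
  then show ?thesis
    using summable_norm_cancel[OF summable_norm_sqrt_one_minus[OF assms(1)]]
    unfolding sqrt_one_minus_def by (simp add: suminf_mult[symmetric] suminf_mult2)
qed

text \<open>With \<open>c > \<parallel>T\<parallel>\<close>, \<open>c \<surd>(1 - (1 - T\<^sup>2/c\<^sup>2))\<close> is the positive square root of \<open>T\<^sup>2\<close>.\<close>

lemma positive_sqrt_of_square:
  fixes T :: "'h::{real_inner,banach} endo"
  assumes "endo_selfadjoint T"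
  obtains R where "endo_positive R" "R * R = T * T"
    "\<And>U. U * (T * T) = (T * T) * U \<Longrightarrow> U * R = R * U"
proof -
  define c where "c = norm T + 1"
  have "c > 0"
    by (simp add: c_def add_nonneg_pos)
  define X where "X = 1 - (1 / c\<^sup>2) *\<^sub>R (T * T)"
  have sa_X: "endo_selfadjoint X"
    unfolding X_def using assms
    by (intro endo_selfadjoint_diff endo_selfadjoint_one endo_selfadjoint_scaleR
        endo_selfadjoint_mult_commute) simp_all
  have inner_X: "inner (X $$ x) x = (norm x)\<^sup>2 - (norm (T $$ x))\<^sup>2 / c\<^sup>2" for x
    using assms by (simp add: X_def endo_selfadjoint_def inner_diff_left power2_norm_eq_inner)
  have "norm (T $$ x) \<le> c * norm x" for x
    using norm_endo_apply[of T x] by (simp add: c_def distrib_right add_increasing2)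
  then have "(norm (T $$ x))\<^sup>2 \<le> c\<^sup>2 * (norm x)\<^sup>2" for x
    by (metis power_mono norm_ge_zero power_mult_distrib)
  then have "(norm (T $$ x))\<^sup>2 / c\<^sup>2 \<le> (norm x)\<^sup>2" for x
    using \<open>c > 0\<close> by (simp add: pos_divide_le_eq mult.commute)
  then have "endo_positive X"
    using sa_X by (simp add: endo_positive_def inner_X)
  then have norm_X: "norm X \<le> 1"
    by (rule norm_endo_positive_le) (auto simp: inner_X)
  define R where "R = c *\<^sub>R sqrt_one_minus X"
  show ?thesis
  proof
    show "endo_positive R"
      using endo_positive_sqrt_one_minus[OF sa_X norm_X] \<open>c > 0\<close>
      by (simp add: R_def endo_positive_def endo_selfadjoint_scaleR)
    have "R * R = (c * c) *\<^sub>R (1 - X)"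
      by (simp add: R_def sqrt_one_minus_square[OF norm_X])
    then show "R * R = T * T"
      using \<open>c > 0\<close> by (simp add: X_def power2_eq_square)
    show "U * R = R * U" if "U * (T * T) = (T * T) * U" for U
      using sqrt_one_minus_commute[OF norm_X, of U] that
      by (simp add: R_def X_def algebra_simps)
  qed
qed

lemma positive_sqrt_unique:
  assumes "endo_positive S" "endo_positive R" "S * S = R * R" "S * R = R * S"
  shows "S = R"
proof (rule endo_eqI)
  fix x
  define y where "y = (S - R) $$ x"
  have "S $$ y + R $$ y = ((S + R) * (S - R)) $$ x"
    by (simp add: y_def)
  also have "(S + R) * (S - R) = 0"
    using assms(3,4) by (simp add: algebra_simps)
  finally have "inner (S $$ y) y + inner (R $$ y) y = 0"
    by (metis inner_add_left inner_zero_left endo_apply_simps(3))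
  moreover have "inner (S $$ y) y \<ge> 0" "inner (R $$ y) y \<ge> 0"
    using assms(1,2) by (auto simp: endo_positive_def)
  ultimately have "S $$ y = 0" "R $$ y = 0"
    using endo_positive_apply_eq_0 assms(1,2) by (metis add_nonneg_eq_0_iff)+
  have "endo_selfadjoint (S - R)"
    using assms(1,2) by (intro endo_selfadjoint_diff) (auto simp: endo_positive_def)
  then have "inner y y = inner x ((S - R) $$ y)"
    unfolding endo_selfadjoint_def y_def by blast
  also have "\<dots> = 0"
    using \<open>S $$ y = 0\<close> \<open>R $$ y = 0\<close> by simp
  finally show "S $$ x = R $$ x"
    by (simp add: y_def)
qed

text \<open>Every positive square root of \<open>T\<^sup>2\<close> commutes with \<open>T\<^sup>2\<close>, hence equals the power series one.\<close>

lemma positive_sqrt_commute: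
  fixes T S :: "'h::{real_inner,banach} endo"
  assumes "endo_selfadjoint T" "endo_positive S" "S * S = T * T" "U * T = T * U"
  shows "U * S = S * U"
proof -
  obtain R where R: "endo_positive R" "R * R = T * T"
    and commute_R: "\<And>U. U * (T * T) = (T * T) * U \<Longrightarrow> U * R = R * U"
    using positive_sqrt_of_square[OF assms(1)] by blast
  have "S * (T * T) = (T * T) * S"
    by (simp flip: assms(3) add: mult.assoc)
  then have "S = R"
    using positive_sqrt_unique[OF assms(2) R(1)] assms(3) R(2) commute_R by metis
  moreover have "U * (T * T) = (T * T) * U"
    using assms(4) by (metis mult.assoc)
  ultimately show ?thesis
    using commute_R by simp
qed

lemma endo_invertible_one_plus_positive:
  fixes S :: "'h::{real_inner,banach} endo"
  assumes "endo_positive S"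
  shows "endo_invertible (1 + S)"
proof -
  define c where "c = norm S"
  have "c \<ge> 0"
    by (simp add: c_def)
  define Y where "Y = (c / (1 + c)) *\<^sub>R 1 - (1 / (1 + c)) *\<^sub>R S"
  have inner_Y: "inner (Y $$ x) x = (c * (norm x)\<^sup>2 - inner (S $$ x) x) / (1 + c)" for x
    using \<open>c \<ge> 0\<close> by (simp add: Y_def inner_diff_left power2_norm_eq_inner diff_divide_distrib)
  have "inner (S $$ x) x \<le> c * (norm x)\<^sup>2" for x
    using inner_endo_apply_le[of S x] by (simp add: c_def)
  moreover have "endo_selfadjoint Y"
    unfolding Y_def using assms
    by (intro endo_selfadjoint_diff endo_selfadjoint_scaleR endo_selfadjoint_one)
      (simp add: endo_positive_def)
  ultimately have "endo_positive Y"
    using \<open>c \<ge> 0\<close> by (simp add: endo_positive_def inner_Y)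
  then have "norm Y \<le> c / (1 + c)"
    using assms \<open>c \<ge> 0\<close>
    by (intro norm_endo_positive_le) (auto simp: inner_Y endo_positive_def divide_right_mono)
  also have "\<dots> < 1"
    using \<open>c \<ge> 0\<close> by simp
  finally have "norm Y < 1" .
  have "1 + S = (1 + c) *\<^sub>R (1 - Y)"
    using \<open>c \<ge> 0\<close> by (simp add: Y_def algebra_simps scaleR_diff_right field_simps)
  then show ?thesis
    unfolding endo_invertible_def using Neumann_series[OF \<open>norm Y < 1\<close>] \<open>c \<ge> 0\<close>
    by (intro exI[of _ "(1 / (1 + c)) *\<^sub>R (\<Sum>n. Y ^ n)"]) simp
qed

lemma commute_inverse:
  fixes A :: "'a::monoid_mult"
  assumes "A * B = 1" "B * A = 1" "U * A = A * U"
  shows "U * B = B * U"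
proof -
  have "U * B = (B * A) * U * B"
    using assms(2) by simp
  also have "\<dots> = B * (U * A) * B"
    using assms(3) by (simp add: mult.assoc)
  also have "\<dots> = B * U"
    using assms(1) by (simp add: mult.assoc)
  finally show ?thesis .
qed

text \<open>The two factors multiply to \<open>1 + S\<close>, in either order.\<close>

lemma endo_invertible_one_plus_half:
  fixes T S :: "'h::{real_inner,banach} endo"
  assumes "endo_selfadjoint T" "endo_positive S" "S * S = T * T"
  shows "endo_invertible (1 + (1/2) *\<^sub>R (S + T))" "endo_invertible (1 + (1/2) *\<^sub>R (S - T))"
proof -
  have "S * T = T * S"
    using positive_sqrt_commute[OF assms] by simp
  then have "(S + T) * (S - T) = 0" "(S - T) * (S + T) = 0"
    using assms(3) by (simp_all add: algebra_simps)
  then have products: "(1/2) *\<^sub>R (S + T) * (1/2) *\<^sub>R (S - T) = 0"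
    "(1/2) *\<^sub>R (S - T) * (1/2) *\<^sub>R (S + T) = 0"
    by simp_all
  have "(1/2) *\<^sub>R (S + T) + (1/2) *\<^sub>R (S - T) = (1/2 + 1/2) *\<^sub>R S"
    by (simp only: scaleR_add_right scaleR_diff_right scaleR_add_left) simp
  then have sums: "(1/2) *\<^sub>R (S + T) + (1/2) *\<^sub>R (S - T) = S"
    "(1/2) *\<^sub>R (S - T) + (1/2) *\<^sub>R (S + T) = S"
    by (simp_all add: add.commute)
  have expand: "(1 + a) * (1 + b) = 1 + (a + b) + a * b" for a b :: "'h endo"
    by (simp add: algebra_simps)
  have factor: "(1 + (1/2) *\<^sub>R (S + T)) * (1 + (1/2) *\<^sub>R (S - T)) = 1 + S"
    "(1 + (1/2) *\<^sub>R (S - T)) * (1 + (1/2) *\<^sub>R (S + T)) = 1 + S"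
    by (simp_all only: expand products sums add_0_right)
  obtain B where B: "(1 + S) * B = 1" "B * (1 + S) = 1"
    using endo_invertible_one_plus_positive[OF assms(2)] by (auto simp: endo_invertible_def)
  have inv: "endo_invertible V" if "V * W = 1 + S" "W * V = 1 + S" for V W
    unfolding endo_invertible_def
  proof (intro exI conjI)
    show "V * (W * B) = 1"
      by (simp add: mult.assoc[symmetric] that B)
    have "V * (1 + S) = (1 + S) * V"
      using that by (metis mult.assoc)
    then have "V * B = B * V"
      by (rule commute_inverse[OF B])
    then have "W * B * V = (W * V) * B"
      by (simp add: mult.assoc)
    then show "W * B * V = 1"
      by (simp add: that B)
  qed
  show "endo_invertible (1 + (1/2) *\<^sub>R (S + T))" "endo_invertible (1 + (1/2) *\<^sub>R (S - T))"
    using inv[OF factor(1,2)] inv[OF factor(2,1)] .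
qed

section \<open>Square-integrable functions\<close>

lemma borel_measurable_bounded_linear:
  "bounded_linear g \<Longrightarrow> f \<in> borel_measurable M \<Longrightarrow> (\<lambda>x. g (f x)) \<in> borel_measurable M"
  by (rule measurable_compose[OF _ borel_measurable_continuous_onI]) (auto intro: linear_continuous_on)

lemma borel_measurable_cnj [measurable]:
  "f \<in> borel_measurable M \<Longrightarrow> (\<lambda>x. cnj (f x)) \<in> borel_measurable M"
  by (rule borel_measurable_bounded_linear[OF bounded_linear_cnj])

lemma borel_measurable_vec_nth [measurable]:
  "(f :: 'a \<Rightarrow> 'b::real_normed_vector ^ 'n) \<in> borel_measurable M \<Longrightarrow> (\<lambda>x. f x $ i) \<in> borel_measurable M"
  by (rule borel_measurable_bounded_linear[OF bounded_linear_vec_nth])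

lemma mult_le_sum_squares:
  fixes u v :: real
  assumes "0 \<le> u" "0 \<le> v"
  shows "u * v \<le> u\<^sup>2 + v\<^sup>2"
  using sum_squares_bound[of u v] mult_nonneg_nonneg[OF assms] by (simp add: mult.assoc)

definition square_integrable :: "'a measure \<Rightarrow> ('a \<Rightarrow> 'b::{banach,second_countable_topology}) \<Rightarrow> bool" where
  "square_integrable M f \<longleftrightarrow> f \<in> borel_measurable M \<and> integrable M (\<lambda>x. (norm (f x))\<^sup>2)"

lemma square_integrable_zero: "square_integrable M (\<lambda>x. 0)"
  by (simp add: square_integrable_def)

lemma square_integrable_add:
  assumes "square_integrable M f" "square_integrable M g"
  shows "square_integrable M (\<lambda>x. f x + g x)"
proof -
  have [measurable]: "f \<in> borel_measurable M" "g \<in> borel_measurable M"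
    and int: "integrable M (\<lambda>x. 2 * (norm (f x))\<^sup>2 + 2 * (norm (g x))\<^sup>2)"
    using assms by (auto simp: square_integrable_def)
  have "(norm (f x + g x))\<^sup>2 \<le> 2 * (norm (f x))\<^sup>2 + 2 * (norm (g x))\<^sup>2" for x
  proof -
    have "(norm (f x + g x))\<^sup>2 \<le> (norm (f x) + norm (g x))\<^sup>2"
      by (simp add: norm_triangle_ineq power_mono)
    also have "\<dots> \<le> 2 * (norm (f x))\<^sup>2 + 2 * (norm (g x))\<^sup>2"
      using sum_squares_bound[of "norm (f x)" "norm (g x)"]
      by (simp add: power2_eq_square algebra_simps)
    finally show ?thesis .
  qed
  then show ?thesis
    unfolding square_integrable_def by (auto intro: Bochner_Integration.integrable_bound[OF int])
qed

lemma square_integrable_scaleR: "square_integrable M f \<Longrightarrow> square_integrable M (\<lambda>x. c *\<^sub>R f x)"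
  by (auto simp: square_integrable_def power_mult_distrib)

lemma square_integrable_mult_left:
  "square_integrable M h \<Longrightarrow> square_integrable M (\<lambda>x. c * (h x :: complex))"
  by (auto simp: square_integrable_def norm_mult power_mult_distrib)

lemma square_integrable_diff:
  "square_integrable M f \<Longrightarrow> square_integrable M g \<Longrightarrow> square_integrable M (\<lambda>x. f x - g x)"
  using square_integrable_add[of M f "\<lambda>x. (-1) *\<^sub>R g x"] square_integrable_scaleR[of M g "-1"]
  by simp

lemma square_integrable_sum:
  "finite K \<Longrightarrow> (\<And>k. k \<in> K \<Longrightarrow> square_integrable M (F k)) \<Longrightarrow> square_integrable M (\<lambda>x. \<Sum>k\<in>K. F k x)"
  by (induction K rule: finite_induct) (auto intro: square_integrable_add square_integrable_zero)

lemma integrable_mult_cnj: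
  assumes "square_integrable M a" "square_integrable M b"
  shows "integrable M (\<lambda>x. a x * cnj (b x :: complex))"
proof -
  have [measurable]: "a \<in> borel_measurable M" "b \<in> borel_measurable M"
    and int: "integrable M (\<lambda>x. (cmod (a x))\<^sup>2 + (cmod (b x))\<^sup>2)"
    using assms by (auto simp: square_integrable_def)
  have "cmod (a x) * cmod (b x) \<le> (cmod (a x))\<^sup>2 + (cmod (b x))\<^sup>2" for x
    by (simp add: mult_le_sum_squares)
  then show ?thesis
    by (intro Bochner_Integration.integrable_bound[OF int]) (measurable, auto simp: norm_mult)
qed

text \<open>A subsequence whose \<open>L\<^sup>2\<close> increments decay like \<open>4\<^sup>-\<^sup>i\<close> converges a.e.:
  \<open>\<Sum>\<^sub>i 2\<^sup>i \<parallel>D\<^sub>i\<parallel>\<^sup>2\<close> has finite integral, and \<open>\<parallel>D\<^sub>i\<parallel> \<le> 2\<^sup>-\<^sup>i + 2\<^sup>i \<parallel>D\<^sub>i\<parallel>\<^sup>2\<close>.\<close>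

lemma AE_summable_norm_of_fast_decay:
  fixes D :: "nat \<Rightarrow> 'a \<Rightarrow> 'b::{banach,second_countable_topology}"
  assumes [measurable]: "\<And>i. D i \<in> borel_measurable M"
    and int: "\<And>i. integrable M (\<lambda>x. (norm (D i x))\<^sup>2)"
    and small: "\<And>i. (LINT x|M. (norm (D i x))\<^sup>2) \<le> (1/4) ^ i"
  shows "AE x in M. summable (\<lambda>i. norm (D i x))"
proof -
  define a where "a i = 2 ^ i * (LINT x|M. (norm (D i x))\<^sup>2)" for i :: nat
  have a_nonneg: "0 \<le> a i" for i
    unfolding a_def by (simp add: integral_nonneg_AE)
  have "a i \<le> (1/2) ^ i" for i
  proof -
    have "a i \<le> 2 ^ i * (1/4) ^ i"
      unfolding a_def using small[of i] by (intro mult_left_mono) auto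
    then show ?thesis
      by (simp add: power_mult_distrib[symmetric])
  qed
  then have "summable a"
    by (intro summable_comparison_test[OF _ summable_geometric[of "1/2::real"]]) (auto simp: a_nonneg)
  define g where "g x = (\<Sum>i. ennreal (2 ^ i * (norm (D i x))\<^sup>2))" for x
  have "(\<integral>\<^sup>+x. g x \<partial>M) = (\<Sum>i. \<integral>\<^sup>+x. ennreal (2 ^ i * (norm (D i x))\<^sup>2) \<partial>M)"
    unfolding g_def by (rule nn_integral_suminf) measurable
  also have "\<dots> = (\<Sum>i. ennreal (a i))"
    unfolding a_def using int by (subst nn_integral_eq_integral) auto
  also have "\<dots> = ennreal (suminf a)"
    by (rule suminf_ennreal_eq[OF a_nonneg summable_sums[OF \<open>summable a\<close>]])
  finally have "AE x in M. g x < \<infinity>"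
    by (intro finite_nn_integral_imp_ae_finite) (simp_all add: g_def)
  then show ?thesis
  proof eventually_elim
    case (elim x)
    then have summable_sq: "summable (\<lambda>i. 2 ^ i * (norm (D i x))\<^sup>2)"
      unfolding g_def by (intro summable_suminf_not_top) auto
    have bound: "norm (D i x) \<le> (1/2) ^ i + 2 ^ i * (norm (D i x))\<^sup>2" for i
    proof -
      have "norm (D i x) * (1/2) ^ i \<le> ((1/2) ^ i)\<^sup>2 + (norm (D i x))\<^sup>2"
        using mult_le_sum_squares[of "norm (D i x)" "(1/2) ^ i"] by simp
      then have "norm (D i x) * (1/2) ^ i * 2 ^ i \<le> (((1/2) ^ i)\<^sup>2 + (norm (D i x))\<^sup>2) * 2 ^ i"
        by (rule mult_right_mono) simp
      then show ?thesis
        by (simp add: algebra_simps power2_eq_square power_mult_distrib[symmetric])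
    qed
    have "summable (\<lambda>i. (1/2::real) ^ i + 2 ^ i * (norm (D i x))\<^sup>2)"
      using summable_sq by (intro summable_add summable_geometric) simp_all
    then show ?case
      by (rule summable_comparison_test[rotated]) (simp add: bound)
  qed
qed

lemma nn_integral_sq_dist_limit_le:
  fixes G :: "nat \<Rightarrow> 'a \<Rightarrow> 'b::{banach,second_countable_topology}"
  assumes [measurable]: "\<And>i. G i \<in> borel_measurable M" "h \<in> borel_measurable M"
    and lim: "AE x in M. (\<lambda>i. G i x) \<longlonglongrightarrow> f x"
    and int: "\<And>i. integrable M (\<lambda>x. (norm (h x - G i x))\<^sup>2)"
    and ev: "eventually (\<lambda>i. (LINT x|M. (norm (h x - G i x))\<^sup>2) \<le> e) sequentially"
  shows "(\<integral>\<^sup>+x. ennreal ((norm (h x - f x))\<^sup>2) \<partial>M) \<le> ennreal e"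
proof -
  have "(\<integral>\<^sup>+x. ennreal ((norm (h x - f x))\<^sup>2) \<partial>M)
      = (\<integral>\<^sup>+x. liminf (\<lambda>i. ennreal ((norm (h x - G i x))\<^sup>2)) \<partial>M)"
    using lim
  proof (intro nn_integral_cong_AE, eventually_elim)
    case (elim x)
    then have "(\<lambda>i. ennreal ((norm (h x - G i x))\<^sup>2)) \<longlonglongrightarrow> ennreal ((norm (h x - f x))\<^sup>2)"
      by (intro tendsto_ennrealI tendsto_intros)
    then show ?case
      by (rule lim_imp_Liminf[OF trivial_limit_sequentially, symmetric])
  qed
  also have "\<dots> \<le> liminf (\<lambda>i. \<integral>\<^sup>+x. ennreal ((norm (h x - G i x))\<^sup>2) \<partial>M)"
    by (rule nn_integral_liminf) measurable
  also have "\<dots> \<le> ennreal e"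
  proof (rule Liminf_le)
    show "\<forall>\<^sub>F i in sequentially. (\<integral>\<^sup>+x. ennreal ((norm (h x - G i x))\<^sup>2) \<partial>M) \<le> ennreal e"
      using ev
      by eventually_elim (subst nn_integral_eq_integral, use int in \<open>auto intro: ennreal_leI\<close>)
  qed simp
  finally show ?thesis .
qed

lemma Cauchy_subseq_geometric:
  fixes d :: "nat \<Rightarrow> nat \<Rightarrow> real"
  assumes "\<And>e. e > 0 \<Longrightarrow> \<exists>N. \<forall>i\<ge>N. \<forall>j\<ge>N. d i j < e"
  obtains r where "strict_mono r" "\<And>n i j. i \<ge> r n \<Longrightarrow> j \<ge> r n \<Longrightarrow> d i j < (1/4) ^ n"
proof -
  have "\<exists>r. \<forall>n. (\<forall>i\<ge>r n. \<forall>j\<ge>r n. d i j < (1/4) ^ n) \<and> r n < r (Suc n)"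
  proof (intro dependent_nat_choice)
    show "\<exists>N. \<forall>i\<ge>N. \<forall>j\<ge>N. d i j < (1/4) ^ 0"
      using assms[of 1] by simp
    fix x n
    obtain N where "\<forall>i\<ge>N. \<forall>j\<ge>N. d i j < (1/4) ^ Suc n"
      using assms[of "(1/4) ^ Suc n"] by auto
    then show "\<exists>y. (\<forall>i\<ge>y. \<forall>j\<ge>y. d i j < (1/4) ^ Suc n) \<and> x < y"
      by (intro exI[of _ "max N (Suc x)"]) auto
  qed
  then show ?thesis
    using that strict_mono_Suc_iff by blast
qed

lemma AE_convergent_subseq_of_L2_Cauchy:
  fixes F :: "nat \<Rightarrow> 'a \<Rightarrow> 'b::{banach,second_countable_topology}"
  assumes sq_F: "\<And>n. square_integrable M (F n)"
    and Cauchy: "\<And>e. e > 0 \<Longrightarrow> \<exists>N. \<forall>i\<ge>N. \<forall>j\<ge>N. (LINT x|M. (norm (F i x - F j x))\<^sup>2) < e"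
  obtains r f where "strict_mono r" "f \<in> borel_measurable M" "AE x in M. (\<lambda>i. F (r i) x) \<longlonglongrightarrow> f x"
proof -
  have [measurable]: "F n \<in> borel_measurable M" for n
    using sq_F by (simp add: square_integrable_def)
  obtain r where "strict_mono r"
    and r: "\<And>n i j. i \<ge> r n \<Longrightarrow> j \<ge> r n \<Longrightarrow> (LINT x|M. (norm (F i x - F j x))\<^sup>2) < (1/4) ^ n"
    using Cauchy_subseq_geometric[OF Cauchy] by blast
  have "(LINT x|M. (norm (F (r (Suc i)) x - F (r i) x))\<^sup>2) \<le> (1/4) ^ i" for i
    using r[of i "r (Suc i)" "r i"] \<open>strict_mono r\<close> by (simp add: strict_mono_less_eq)
  then have "AE x in M. summable (\<lambda>i. norm (F (r (Suc i)) x - F (r i) x))"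
    using square_integrable_diff[OF sq_F sq_F]
    by (intro AE_summable_norm_of_fast_decay) (auto simp: square_integrable_def)
  then have convergent: "AE x in M. convergent (\<lambda>i. F (r i) x)"
  proof eventually_elim
    case (elim x)
    then have "convergent (\<lambda>n. \<Sum>i<n. F (r (Suc i)) x - F (r i) x)"
      using summable_LIMSEQ[OF summable_norm_cancel[OF elim]] unfolding convergent_def by blast
    then have "convergent (\<lambda>n. (F (r n) x - F (r 0) x) + F (r 0) x)"
      by (intro convergent_add convergent_const) (simp add: sum_lessThan_telescope[of "\<lambda>i. F (r i) x"])
    then show ?case
      by simp
  qed
  define f where "f x = lim (\<lambda>i. F (r i) x)" for x
  have "f \<in> borel_measurable M"
    unfolding f_def by measurable
  moreover have "AE x in M. (\<lambda>i. F (r i) x) \<longlonglongrightarrow> f x"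
    using convergent by eventually_elim (simp add: f_def convergent_LIMSEQ_iff)
  ultimately show ?thesis
    using that \<open>strict_mono r\<close> by blast
qed

theorem square_integrable_complete:
  fixes F :: "nat \<Rightarrow> 'a \<Rightarrow> 'b::{banach,second_countable_topology}"
  assumes sq_F: "\<And>n. square_integrable M (F n)"
    and Cauchy: "\<And>e. e > 0 \<Longrightarrow> \<exists>N. \<forall>i\<ge>N. \<forall>j\<ge>N. (LINT x|M. (norm (F i x - F j x))\<^sup>2) < e"
  obtains f where "square_integrable M f" "(\<lambda>n. LINT x|M. (norm (F n x - f x))\<^sup>2) \<longlonglongrightarrow> 0"
proof -
  have [measurable]: "F n \<in> borel_measurable M" for n
    using sq_F by (simp add: square_integrable_def)
  have int: "integrable M (\<lambda>x. (norm (F i x - F j x))\<^sup>2)" for i j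
    using square_integrable_diff[OF sq_F sq_F] by (simp add: square_integrable_def)
  obtain r f where "strict_mono r" and [measurable]: "f \<in> borel_measurable M"
    and lim: "AE x in M. (\<lambda>i. F (r i) x) \<longlonglongrightarrow> f x"
    using AE_convergent_subseq_of_L2_Cauchy[OF sq_F Cauchy] by blast
  have close: "integrable M (\<lambda>x. (norm (F n x - f x))\<^sup>2) \<and> (LINT x|M. (norm (F n x - f x))\<^sup>2) \<le> e"
    if N: "\<forall>i\<ge>N. \<forall>j\<ge>N. (LINT x|M. (norm (F i x - F j x))\<^sup>2) < e" and "n \<ge> N" for e N n
  proof -
    have "e > 0"
      using N[rule_format, of N N] by simp
    have "\<forall>\<^sub>F i in sequentially. (LINT x|M. (norm (F n x - F (r i) x))\<^sup>2) \<le> e"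
      unfolding eventually_sequentially
      using N \<open>n \<ge> N\<close> order_trans[OF _ seq_suble[OF \<open>strict_mono r\<close>]]
      by (auto intro!: exI[of _ N] less_imp_le)
    then have "(\<integral>\<^sup>+x. ennreal ((norm (F n x - f x))\<^sup>2) \<partial>M) \<le> ennreal e"
      by (intro nn_integral_sq_dist_limit_le[OF _ _ lim int]) measurable
    moreover from this have "integrable M (\<lambda>x. (norm (F n x - f x))\<^sup>2)"
      by (intro integrableI_bounded) (simp_all add: order_le_less_trans)
    ultimately show ?thesis
      using \<open>e > 0\<close> by (simp add: nn_integral_eq_integral ennreal_le_iff integral_nonneg_AE)
  qed
  obtain N1 where "\<forall>i\<ge>N1. \<forall>j\<ge>N1. (LINT x|M. (norm (F i x - F j x))\<^sup>2) < 1"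
    using Cauchy[of 1] by auto
  then have "square_integrable M (\<lambda>x. F N1 x - (F N1 x - f x))"
    using close[of N1 1 N1] sq_F
    by (intro square_integrable_diff[of M "F N1" "\<lambda>x. F N1 x - f x"]) (auto simp: square_integrable_def)
  moreover have "(\<lambda>n. LINT x|M. (norm (F n x - f x))\<^sup>2) \<longlonglongrightarrow> 0"
  proof (rule LIMSEQ_I)
    fix e :: real
    assume "e > 0"
    then obtain N where "\<forall>i\<ge>N. \<forall>j\<ge>N. (LINT x|M. (norm (F i x - F j x))\<^sup>2) < e / 2"
      using Cauchy[of "e / 2"] by auto
    then have "\<forall>n\<ge>N. norm ((LINT x|M. (norm (F n x - f x))\<^sup>2) - 0) < e"
      using close \<open>e > 0\<close> by (fastforce simp: integral_nonneg_AE)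
    then show "\<exists>N. \<forall>n\<ge>N. norm ((LINT x|M. (norm (F n x - f x))\<^sup>2) - 0) < e"
      by blast
  qed
  ultimately show ?thesis
    using that by simp
qed

section \<open>Matrix-valued square-integrable functions\<close>

lemma borel_measurable_vec:
  fixes f :: "'a \<Rightarrow> 'b::euclidean_space^'n"
  assumes m: "\<And>i. (\<lambda>x. f x $ i) \<in> borel_measurable M"
  shows "f \<in> borel_measurable M"
  unfolding borel_measurable_euclidean_space[where f=f]
proof
  fix b :: "'b^'n" assume "b \<in> Basis"
  then obtain i u where b: "b = axis i u" "u \<in> Basis" by (auto simp: Basis_vec_def)
  have [measurable]: "(\<lambda>x. f x $ i) \<in> borel_measurable M" by (rule m)
  have "(\<lambda>x. f x $ i \<bullet> u) \<in> borel_measurable M" by measurable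
  then show "(\<lambda>x. f x \<bullet> b) \<in> borel_measurable M" by (simp add: b inner_axis)
qed

lemma power2_norm_vec: "(norm (x :: 'b::real_normed_vector^'n))\<^sup>2 = (\<Sum>i\<in>UNIV. (norm (x $ i))\<^sup>2)"
  unfolding norm_vec_def L2_set_def by (simp add: sum_nonneg)

lemma power2_norm_matrix: "(norm (A :: complex^'r^'s))\<^sup>2 = (\<Sum>i\<in>UNIV. \<Sum>j\<in>UNIV. (cmod (A $ i $ j))\<^sup>2)"
  by (simp add: power2_norm_vec)

lemma norm_matrix_entry_le: "cmod ((A::complex^'r^'s) $ i $ j) \<le> norm A"
proof -
  have "cmod (A $ i $ j) \<le> norm (A $ i)" by (rule Finite_Cartesian_Product.norm_nth_le)
  also have "\<dots> \<le> norm A" by (rule Finite_Cartesian_Product.norm_nth_le)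
  finally show ?thesis .
qed

lemma L2_iff_entries: "f \<in> L2 M \<longleftrightarrow> (\<forall>i j. square_integrable M (\<lambda>x. f x $ i $ j))"
  unfolding L2_def square_integrable_def by simp

lemma L2_iff_square_integrable: "f \<in> L2 M \<longleftrightarrow> square_integrable M (f :: 'a \<Rightarrow> complex^'r^'s)"
proof
  assume f: "f \<in> L2 M"
  then have e: "square_integrable M (\<lambda>x. f x $ i $ j)" for i j by (simp add: L2_iff_entries)
  have "f \<in> borel_measurable M"
    by (intro borel_measurable_vec) (use e in \<open>auto simp: square_integrable_def\<close>)
  moreover have "integrable M (\<lambda>x. (norm (f x))\<^sup>2)"
    unfolding power2_norm_matrix using e by (auto simp: square_integrable_def)
  ultimately show "square_integrable M f" by (simp add: square_integrable_def)
next
  assume f: "square_integrable M f"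
  then have [measurable]: "f \<in> borel_measurable M" and i: "integrable M (\<lambda>x. (norm (f x))\<^sup>2)"
    by (auto simp: square_integrable_def)
  have "square_integrable M (\<lambda>x. f x $ i $ j)" for i j
    unfolding square_integrable_def
  proof
    show "(\<lambda>x. f x $ i $ j) \<in> borel_measurable M" by measurable
    show "integrable M (\<lambda>x. (norm (f x $ i $ j))\<^sup>2)"
    proof (rule Bochner_Integration.integrable_bound[OF i])
      show "(\<lambda>x. (norm (f x $ i $ j))\<^sup>2) \<in> borel_measurable M" by measurable
      show "AE x in M. norm ((norm (f x $ i $ j))\<^sup>2) \<le> norm ((norm (f x))\<^sup>2)"
        using norm_matrix_entry_le
        by (auto intro!: power_mono)
    qed
  qed
  then show "f \<in> L2 M" by (simp add: L2_iff_entries)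
qed

lemma L2_add: "f \<in> L2 M \<Longrightarrow> g \<in> L2 M \<Longrightarrow> (\<lambda>x. f x + g x) \<in> L2 M"
  by (simp add: L2_iff_square_integrable square_integrable_add)
lemma L2_diff: "f \<in> L2 M \<Longrightarrow> g \<in> L2 M \<Longrightarrow> (\<lambda>x. f x - g x) \<in> L2 M"
  by (simp add: L2_iff_square_integrable square_integrable_diff)
lemma L2_zero: "(\<lambda>x. 0) \<in> L2 M"
  by (simp add: L2_iff_square_integrable square_integrable_zero)
lemma L2_matrix_mult: "f \<in> L2 M \<Longrightarrow> (\<lambda>x. A ** f x) \<in> L2 M"
  unfolding L2_iff_entries matrix_matrix_mult_def
  by (auto intro!: square_integrable_sum square_integrable_mult_left)
lemma L2_mscale: "f \<in> L2 M \<Longrightarrow> (\<lambda>x. mscale c (f x)) \<in> L2 M"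
  unfolding L2_iff_entries mscale_def by (auto intro!: square_integrable_mult_left)
lemma L2_sum: "finite K \<Longrightarrow> (\<And>k. k \<in> K \<Longrightarrow> F k \<in> L2 M) \<Longrightarrow> (\<lambda>x. \<Sum>k\<in>K. F k x) \<in> L2 M"
  by (induction K rule: finite_induct) (auto intro: L2_add L2_zero)

lemma integrable_L2_entry_mult_cnj: "f \<in> L2 M \<Longrightarrow> g \<in> L2 M \<Longrightarrow>
    integrable M (\<lambda>x. f x $ i $ j * cnj (g x $ k $ l))"
  by (rule integrable_mult_cnj) (auto simp: L2_iff_entries)

lemma ctrans_nth[simp]: "ctrans A $ j $ i = cnj (A $ i $ j)"
  by (simp add: ctrans_def)

lemma ctrans_ctrans[simp]: "ctrans (ctrans A) = A"
  by (simp add: ctrans_def vec_eq_iff)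

lemma ctrans_mult: "ctrans (A ** B) = ctrans B ** ctrans A"
  by (simp add: ctrans_def matrix_matrix_mult_def vec_eq_iff mult.commute)

lemma ctrans_add: "ctrans (A + B) = ctrans A + ctrans B"
  by (simp add: ctrans_def vec_eq_iff)

lemma ctrans_zero[simp]: "ctrans 0 = 0"
  by (simp add: ctrans_def vec_eq_iff)

lemma ctrans_sum: "ctrans (\<Sum>k\<in>K. A k) = (\<Sum>k\<in>K. ctrans (A k))"
  by (induction K rule: infinite_finite_induct) (auto simp: ctrans_add)

lemma minner_entry:
  assumes "f \<in> L2 M" "g \<in> L2 M"
  shows "minner M f g $ i $ k = (\<Sum>j\<in>UNIV. LINT x|M. f x $ i $ j * cnj (g x $ k $ j))"
proof -
  have "minner M f g $ i $ k = (LINT x|M. (\<Sum>j\<in>UNIV. f x $ i $ j * cnj (g x $ k $ j)))"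
    by (simp add: minner_def matrix_matrix_mult_def)
  also have "\<dots> = (\<Sum>j\<in>UNIV. LINT x|M. f x $ i $ j * cnj (g x $ k $ j))"
    by (rule Bochner_Integration.integral_sum) (rule integrable_L2_entry_mult_cnj[OF assms])
  finally show ?thesis .
qed

lemma minner_add_left:
  assumes "f \<in> L2 M" "g \<in> L2 M" "h \<in> L2 M"
  shows "minner M (\<lambda>x. f x + g x) h = minner M f h + minner M g h"
proof -
  have "minner M (\<lambda>x. f x + g x) h $ i $ k = minner M f h $ i $ k + minner M g h $ i $ k" for i k
    using assms L2_add[OF assms(1,2)]
    by (simp add: minner_entry distrib_right sum.distrib[symmetric] integrable_L2_entry_mult_cnj)
  then show ?thesis by (simp add: vec_eq_iff)
qed

lemma minner_diff_left:
  assumes "f \<in> L2 M" "g \<in> L2 M" "h \<in> L2 M"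
  shows "minner M (\<lambda>x. f x - g x) h = minner M f h - minner M g h"
proof -
  have "minner M (\<lambda>x. f x - g x) h $ i $ k = minner M f h $ i $ k - minner M g h $ i $ k" for i k
    using assms L2_diff[OF assms(1,2)]
    by (simp add: minner_entry left_diff_distrib sum_subtractf[symmetric] integrable_L2_entry_mult_cnj)
  then show ?thesis by (simp add: vec_eq_iff)
qed

lemma minner_mult_left:
  assumes f: "f \<in> L2 M" and h: "h \<in> L2 M"
  shows "minner M (\<lambda>x. A ** f x) h = A ** minner M f h"
proof -
  have "minner M (\<lambda>x. A ** f x) h $ i $ k = (A ** minner M f h) $ i $ k" for i k
  proof -
    have "minner M (\<lambda>x. A ** f x) h $ i $ k
        = (\<Sum>j\<in>UNIV. LINT x|M. (A ** f x) $ i $ j * cnj (h x $ k $ j))"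
      by (rule minner_entry[OF L2_matrix_mult[OF f] h])
    also have "\<dots> = (\<Sum>j\<in>UNIV. LINT x|M. (\<Sum>l\<in>UNIV. A $ i $ l * (f x $ l $ j * cnj (h x $ k $ j))))"
      by (simp add: matrix_matrix_mult_def sum_distrib_right mult.assoc)
    also have "\<dots> = (\<Sum>j\<in>UNIV. \<Sum>l\<in>UNIV. A $ i $ l * (LINT x|M. f x $ l $ j * cnj (h x $ k $ j)))"
      by (subst Bochner_Integration.integral_sum) (auto intro!: integrable_L2_entry_mult_cnj f h)
    also have "\<dots> = (\<Sum>l\<in>UNIV. A $ i $ l * (\<Sum>j\<in>UNIV. LINT x|M. f x $ l $ j * cnj (h x $ k $ j)))"
      by (subst sum.swap) (simp add: sum_distrib_left)
    also have "\<dots> = (A ** minner M f h) $ i $ k"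
      using f h by (simp add: minner_entry matrix_matrix_mult_def)
    finally show ?thesis .
  qed
  then show ?thesis by (simp add: vec_eq_iff)
qed

lemma minner_ctrans:
  assumes "f \<in> L2 M" "g \<in> L2 M"
  shows "minner M g f = ctrans (minner M f g)"
proof -
  have "minner M g f $ i $ k = ctrans (minner M f g) $ i $ k" for i k
  proof -
    have e: "(LINT x|M. g x $ i $ j * cnj (f x $ k $ j))
        = cnj (LINT x|M. f x $ k $ j * cnj (g x $ i $ j))" for j
    proof -
      have "cnj (LINT x|M. f x $ k $ j * cnj (g x $ i $ j))
          = (LINT x|M. cnj (f x $ k $ j * cnj (g x $ i $ j)))"
        by (rule Bochner_Integration.integral_cnj[symmetric])
      then show ?thesis by (simp add: mult.commute)
    qed
    show ?thesis using assms by (simp add: minner_entry e cnj_sum)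
  qed
  then show ?thesis by (simp add: vec_eq_iff)
qed

lemma minner_mult_right:
  assumes f: "f \<in> L2 M" and h: "h \<in> L2 M"
  shows "minner M f (\<lambda>x. A ** h x) = minner M f h ** ctrans A"
proof -
  have "minner M f (\<lambda>x. A ** h x) = ctrans (minner M (\<lambda>x. A ** h x) f)"
    using minner_ctrans[OF L2_matrix_mult[OF h] f] by simp
  also have "\<dots> = ctrans (A ** minner M h f)" by (simp add: minner_mult_left[OF h f])
  also have "\<dots> = minner M f h ** ctrans A" by (simp add: ctrans_mult minner_ctrans[OF f h])
  finally show ?thesis .
qed

lemma minner_sum_left:
  assumes "finite K" "\<And>k. k \<in> K \<Longrightarrow> F k \<in> L2 M" "h \<in> L2 M"
  shows "minner M (\<lambda>x. \<Sum>k\<in>K. F k x) h = (\<Sum>k\<in>K. minner M (F k) h)"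
  using assms
proof (induction K rule: finite_induct)
  case empty
  have "minner M (\<lambda>x. 0) h = 0" by (simp add: minner_def matrix_matrix_mult_def vec_eq_iff)
  then show ?case by simp
next
  case (insert a K)
  have "minner M (\<lambda>x. \<Sum>k\<in>insert a K. F k x) h = minner M (\<lambda>x. F a x + (\<Sum>k\<in>K. F k x)) h"
    using insert by simp
  also have "\<dots> = minner M (F a) h + minner M (\<lambda>x. \<Sum>k\<in>K. F k x) h"
    using insert by (intro minner_add_left L2_sum) auto
  finally show ?case using insert by simp
qed

lemma minner_sum_right:
  assumes "finite K" "\<And>k. k \<in> K \<Longrightarrow> F k \<in> L2 M" "h \<in> L2 M"
  shows "minner M h (\<lambda>x. \<Sum>k\<in>K. F k x) = (\<Sum>k\<in>K. minner M h (F k))"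
proof -
  have "minner M h (\<lambda>x. \<Sum>k\<in>K. F k x) = ctrans (minner M (\<lambda>x. \<Sum>k\<in>K. F k x) h)"
    using assms by (intro minner_ctrans L2_sum) auto
  also have "\<dots> = (\<Sum>k\<in>K. ctrans (minner M (F k) h))"
    by (simp add: minner_sum_left[OF assms] ctrans_sum)
  also have "\<dots> = (\<Sum>k\<in>K. minner M h (F k))"
  proof (rule sum.cong[OF refl])
    fix k assume "k \<in> K"
    then show "ctrans (minner M (F k) h) = minner M h (F k)"
      using minner_ctrans[OF assms(3) assms(2)] by simp
  qed
  finally show ?thesis .
qed

lemma minner_aeq_left:
  assumes "f \<in> L2 M" "f' \<in> L2 M" "g \<in> L2 M" "aeq M f f'"
  shows "minner M f g = minner M f' g"
proof -
  have "minner M f g $ i $ k = minner M f' g $ i $ k" for i k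
  proof -
    have "(LINT x|M. f x $ i $ j * cnj (g x $ k $ j))
        = (LINT x|M. f' x $ i $ j * cnj (g x $ k $ j))" for j
    proof (rule integral_cong_AE)
      show "(\<lambda>x. f x $ i $ j * cnj (g x $ k $ j)) \<in> borel_measurable M"
        using integrable_L2_entry_mult_cnj[OF assms(1,3)] by (rule borel_measurable_integrable)
      show "(\<lambda>x. f' x $ i $ j * cnj (g x $ k $ j)) \<in> borel_measurable M"
        using integrable_L2_entry_mult_cnj[OF assms(2,3)] by (rule borel_measurable_integrable)
      show "AE x in M. f x $ i $ j * cnj (g x $ k $ j) = f' x $ i $ j * cnj (g x $ k $ j)"
        using assms(4) unfolding aeq_def by eventually_elim simp
    qed
    then show ?thesis using assms by (simp add: minner_entry)
  qed
  then show ?thesis by (simp add: vec_eq_iff)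
qed

lemma mtrace_zero[simp]: "mtrace 0 = 0"
  by (simp add: mtrace_def)

lemma mtrace_ctrans: "mtrace (ctrans A) = cnj (mtrace A)"
  by (simp add: mtrace_def)

lemma mtrace_add: "mtrace (A + B) = mtrace A + mtrace B"
  by (simp add: mtrace_def sum.distrib)

lemma mtrace_diff: "mtrace (A - B) = mtrace A - mtrace B"
  by (simp add: mtrace_def sum_subtractf)

lemma mtrace_sum: "mtrace (\<Sum>k\<in>K. A k) = (\<Sum>k\<in>K. mtrace (A k))"
  by (induction K rule: infinite_finite_induct) (auto simp: mtrace_add)

lemma mtrace_mult_ctrans_self: "mtrace (A ** ctrans A) = of_real ((norm (A :: complex^'r^'s))\<^sup>2)"
proof -
  have "mtrace (A ** ctrans A) = (\<Sum>i\<in>UNIV. \<Sum>j\<in>UNIV. A $ i $ j * cnj (A $ i $ j))"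
    by (simp add: mtrace_def matrix_matrix_mult_def)
  also have "\<dots> = (\<Sum>i\<in>UNIV. \<Sum>j\<in>UNIV. complex_of_real ((cmod (A $ i $ j))\<^sup>2))"
    by (simp only: complex_norm_square)
  also have "\<dots> = of_real (\<Sum>i\<in>UNIV. \<Sum>j\<in>UNIV. (cmod (A $ i $ j))\<^sup>2)"
    by (simp only: of_real_sum)
  finally show ?thesis by (simp add: power2_norm_matrix)
qed

lemma hinner_self:
  assumes "f \<in> L2 M"
  shows "hinner M f f = of_real (LINT x|M. (norm (f x))\<^sup>2)"
proof -
  have i: "integrable M (\<lambda>x. (cmod (f x $ i $ j))\<^sup>2)" for i j using assms by (simp add: L2_def)
  have "hinner M f f = (\<Sum>i\<in>UNIV. \<Sum>j\<in>UNIV. LINT x|M. f x $ i $ j * cnj (f x $ i $ j))"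
    using assms by (simp add: hinner_def mtrace_def minner_entry)
  also have "\<dots> = (\<Sum>i\<in>UNIV. \<Sum>j\<in>UNIV. LINT x|M. complex_of_real ((cmod (f x $ i $ j))\<^sup>2))"
    by (simp only: complex_norm_square)
  also have "\<dots> = (\<Sum>i\<in>UNIV. \<Sum>j\<in>UNIV. of_real (LINT x|M. (cmod (f x $ i $ j))\<^sup>2))"
    by (simp only: integral_complex_of_real)
  also have "\<dots> = of_real (LINT x|M. (\<Sum>i\<in>UNIV. \<Sum>j\<in>UNIV. (cmod (f x $ i $ j))\<^sup>2))"
    using i by (simp add: Bochner_Integration.integral_sum Bochner_Integration.integrable_sum)
  finally show ?thesis by (simp add: power2_norm_matrix)
qed

lemma l2norm_eq:
  assumes "f \<in> L2 M"
  shows "l2norm M f = sqrt (LINT x|M. (norm (f x))\<^sup>2)"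
  using assms by (simp add: l2norm_def hinner_self)

lemma l2norm_sq:
  assumes "f \<in> L2 M"
  shows "(l2norm M f)\<^sup>2 = (LINT x|M. (norm (f x))\<^sup>2)"
  using assms by (simp add: l2norm_eq integral_nonneg_AE)

lemma aeq_iff_l2norm:
  assumes "f \<in> L2 M" "g \<in> L2 M"
  shows "aeq M f g \<longleftrightarrow> l2norm M (\<lambda>x. f x - g x) = 0"
proof -
  have d: "(\<lambda>x. f x - g x) \<in> L2 M" using assms by (rule L2_diff)
  then have i: "integrable M (\<lambda>x. (norm (f x - g x))\<^sup>2)"
    by (simp add: L2_iff_square_integrable square_integrable_def)
  have "l2norm M (\<lambda>x. f x - g x) = 0 \<longleftrightarrow> (LINT x|M. (norm (f x - g x))\<^sup>2) = 0"
    using d by (simp add: l2norm_eq integral_nonneg_AE)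
  also have "\<dots> \<longleftrightarrow> (AE x in M. (norm (f x - g x))\<^sup>2 = 0)"
    by (rule integral_nonneg_eq_0_iff_AE[OF i]) simp
  also have "\<dots> \<longleftrightarrow> aeq M f g" by (simp add: aeq_def)
  finally show ?thesis by simp
qed

lemma l2norm_nonneg: "f \<in> L2 M \<Longrightarrow> 0 \<le> l2norm M f"
  by (simp add: l2norm_eq integral_nonneg_AE)

lemma L2_complete:
  assumes L2: "\<And>n. F n \<in> L2 M"
    and Cauchy: "\<And>e. e > 0 \<Longrightarrow> \<exists>N. \<forall>i\<ge>N. \<forall>j\<ge>N. l2norm M (\<lambda>x. F i x - F j x) < e"
  obtains f where "f \<in> L2 M" "(\<lambda>n. l2norm M (\<lambda>x. F n x - f x)) \<longlonglongrightarrow> 0"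
proof -
  have "\<exists>N. \<forall>i\<ge>N. \<forall>j\<ge>N. (LINT x|M. (norm (F i x - F j x))\<^sup>2) < e" if "e > 0" for e
  proof -
    obtain N where N: "\<forall>i\<ge>N. \<forall>j\<ge>N. l2norm M (\<lambda>x. F i x - F j x) < sqrt e"
      using Cauchy[of "sqrt e"] \<open>e > 0\<close> by auto
    have "(LINT x|M. (norm (F i x - F j x))\<^sup>2) < e" if "i \<ge> N" "j \<ge> N" for i j
    proof -
      have "(l2norm M (\<lambda>x. F i x - F j x))\<^sup>2 < (sqrt e)\<^sup>2"
        using N that L2 by (intro power_strict_mono) (auto simp: l2norm_nonneg L2_diff)
      then show ?thesis
        using \<open>e > 0\<close> L2 by (simp add: l2norm_sq L2_diff)
    qed
    then show ?thesis
      by blast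
  qed
  then obtain f where f: "square_integrable M f" "(\<lambda>n. LINT x|M. (norm (F n x - f x))\<^sup>2) \<longlonglongrightarrow> 0"
    using square_integrable_complete[of M F] L2 L2_iff_square_integrable by blast
  then have "f \<in> L2 M"
    by (simp add: L2_iff_square_integrable)
  moreover have "(\<lambda>n. l2norm M (\<lambda>x. F n x - f x)) \<longlonglongrightarrow> 0"
    using tendsto_real_sqrt[OF f(2)] \<open>f \<in> L2 M\<close> L2 by (simp add: l2norm_eq L2_diff)
  ultimately show ?thesis
    using that by blast
qed

lemma hinner_cnj: "f \<in> L2 M \<Longrightarrow> g \<in> L2 M \<Longrightarrow> hinner M g f = cnj (hinner M f g)"
  using minner_ctrans[of f M g] by (simp add: hinner_def mtrace_ctrans)

lemma hinner_add_left: "f \<in> L2 M \<Longrightarrow> g \<in> L2 M \<Longrightarrow> h \<in> L2 M \<Longrightarrow>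
    hinner M (\<lambda>x. f x + g x) h = hinner M f h + hinner M g h"
  by (simp add: hinner_def minner_add_left mtrace_add)

lemma hinner_diff_left: "f \<in> L2 M \<Longrightarrow> g \<in> L2 M \<Longrightarrow> h \<in> L2 M \<Longrightarrow>
    hinner M (\<lambda>x. f x - g x) h = hinner M f h - hinner M g h"
  by (simp add: hinner_def minner_diff_left mtrace_diff)

lemma hinner_add_right: "f \<in> L2 M \<Longrightarrow> g \<in> L2 M \<Longrightarrow> h \<in> L2 M \<Longrightarrow>
    hinner M h (\<lambda>x. f x + g x) = hinner M h f + hinner M h g"
  using hinner_cnj[of "\<lambda>x. f x + g x" M h] hinner_cnj[of f M h] hinner_cnj[of g M h]
    hinner_add_left[of f M g h] L2_add[of f M g] by simp

lemma hinner_diff_right: "f \<in> L2 M \<Longrightarrow> g \<in> L2 M \<Longrightarrow> h \<in> L2 M \<Longrightarrow>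
    hinner M h (\<lambda>x. f x - g x) = hinner M h f - hinner M h g"
  using hinner_cnj[of "\<lambda>x. f x - g x" M h] hinner_cnj[of f M h] hinner_cnj[of g M h]
    hinner_diff_left[of f M g h] L2_diff[of f M g] by simp

lemma hinner_aeq_left: "f \<in> L2 M \<Longrightarrow> f' \<in> L2 M \<Longrightarrow> g \<in> L2 M \<Longrightarrow> aeq M f f' \<Longrightarrow> hinner M f g = hinner M f' g"
  by (simp add: hinner_def minner_aeq_left)

lemma mscale_mat: "mscale c A = mat c ** A"
  by (simp add: mscale_def matrix_matrix_mult_def mat_def vec_eq_iff mult_delta_left)

lemma mtrace_mat_mult: "mtrace (mat c ** A) = c * mtrace A"
  by (simp add: mtrace_def matrix_matrix_mult_def mat_def mult_delta_left sum_distrib_left)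

lemma hinner_mscale_left: "f \<in> L2 M \<Longrightarrow> g \<in> L2 M \<Longrightarrow> hinner M (\<lambda>x. mscale c (f x)) g = c * hinner M f g"
  by (simp add: hinner_def mscale_mat minner_mult_left mtrace_mat_mult)

lemma hinner_mscale_right: "f \<in> L2 M \<Longrightarrow> g \<in> L2 M \<Longrightarrow> hinner M f (\<lambda>x. mscale c (g x)) = cnj c * hinner M f g"
proof -
  assume f: "f \<in> L2 M" and g: "g \<in> L2 M"
  have "hinner M f (\<lambda>x. mscale c (g x)) = cnj (hinner M (\<lambda>x. mscale c (g x)) f)"
    using hinner_cnj[OF L2_mscale[OF g] f] by simp
  also have "\<dots> = cnj c * hinner M f g"
    using f g hinner_cnj[of f M g] by (simp add: hinner_mscale_left)
  finally show ?thesis .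
qed

definition matrix_unit :: "'s::finite \<Rightarrow> 'a::finite \<Rightarrow> complex^'a^'s" where
  "matrix_unit b a = (\<chi> i j. if i = b \<and> j = a then 1 else 0)"

lemma mtrace_matrix_unit_mult: "mtrace (matrix_unit b a ** X) = X $ a $ b"
proof -
  have e: "(\<Sum>k\<in>UNIV. (if i = b \<and> k = a then 1 else 0) * X $ k $ i)
      = (if i = b then X $ a $ b else 0)" for i
    by (cases "i = b") (simp_all add: mult_delta_left)
  show ?thesis by (simp add: mtrace_def matrix_unit_def matrix_matrix_mult_def e)
qed

lemma minner_entry_eq_hinner:
  "f \<in> L2 M \<Longrightarrow> g \<in> L2 M \<Longrightarrow> minner M f g $ a $ b = hinner M (\<lambda>x. matrix_unit b a ** f x) g"
  by (simp add: hinner_def minner_mult_left mtrace_matrix_unit_mult)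

lemma Re_hinner_polarization:
  assumes f: "f \<in> L2 M" and g: "g \<in> L2 M"
  shows "Re (hinner M f g) = ((l2norm M (\<lambda>x. f x + g x))\<^sup>2 - (l2norm M f)\<^sup>2 - (l2norm M g)\<^sup>2) / 2"
proof -
  have fg: "(\<lambda>x. f x + g x) \<in> L2 M" using f g by (rule L2_add)
  have sq: "(l2norm M h)\<^sup>2 = Re (hinner M h h)" if "h \<in> L2 M" for h
    using that by (simp add: l2norm_sq hinner_self)
  have "hinner M (\<lambda>x. f x + g x) (\<lambda>x. f x + g x)
      = hinner M f f + hinner M f g + (hinner M g f + hinner M g g)"
    using f g fg by (simp add: hinner_add_left hinner_add_right)
  then have "Re (hinner M (\<lambda>x. f x + g x) (\<lambda>x. f x + g x))
      = Re (hinner M f f) + 2 * Re (hinner M f g) + Re (hinner M g g)"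
    using f g by (simp add: hinner_cnj[of f M g])
  then show ?thesis using sq[OF fg] sq[OF f] sq[OF g] by simp
qed

lemma Im_hinner_eq_Re:
  assumes f: "f \<in> L2 M" and g: "g \<in> L2 M"
  shows "Im (hinner M f g) = Re (hinner M f (\<lambda>x. mscale \<i> (g x)))"
  using f g by (simp add: hinner_mscale_right)

section \<open>Square-summable sequences of matrices\<close>

abbreviation count_nat :: "nat measure" where "count_nat \<equiv> count_space UNIV"

lemma aeq_count_nat: "aeq count_nat f g \<longleftrightarrow> f = g"
  by (simp add: aeq_def AE_count_space fun_eq_iff)

text \<open>A real Hilbert space with inner product \<open>Re (tr (\<Sum>\<^sub>k c\<^sub>k d\<^sub>k\<^sup>*))\<close>;
  complex scalars, and more generally matrices, act on it through \<open>ell2_lmult\<close> below.\<close>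

typedef (overloaded) ('s::finite) ell2 = "L2 count_nat :: (nat \<Rightarrow> complex^'s^'s) set"
  morphisms ell2_seq Ell2 using L2_zero by blast

setup_lifting type_definition_ell2

lemma ell2_seq_L2[simp]: "ell2_seq x \<in> L2 count_nat" using ell2_seq by blast

lemma scaleR_mscale: "r *\<^sub>R (A :: complex^'r^'s) = mscale (of_real r) A"
proof -
  have e: "r *\<^sub>R (z::complex) = of_real r * z" for z by (rule scaleR_conv_of_real)
  show ?thesis unfolding mscale_def vec_eq_iff by (simp add: e)
qed

instantiation ell2 :: (finite) real_inner
begin
lift_definition zero_ell2 :: "'a ell2" is "\<lambda>k. 0" by (rule L2_zero)
lift_definition plus_ell2 :: "'a ell2 \<Rightarrow> 'a ell2 \<Rightarrow> 'a ell2" is "\<lambda>f g k. f k + g k" by (rule L2_add)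
lift_definition minus_ell2 :: "'a ell2 \<Rightarrow> 'a ell2 \<Rightarrow> 'a ell2" is "\<lambda>f g k. f k - g k" by (rule L2_diff)
lift_definition uminus_ell2 :: "'a ell2 \<Rightarrow> 'a ell2" is "\<lambda>f k. - f k"
  using L2_diff[OF L2_zero] by fastforce
lift_definition scaleR_ell2 :: "real \<Rightarrow> 'a ell2 \<Rightarrow> 'a ell2" is "\<lambda>r f k. r *\<^sub>R f k"
  unfolding scaleR_mscale by (rule L2_mscale)
lift_definition norm_ell2 :: "'a ell2 \<Rightarrow> real" is "l2norm count_nat" .
lift_definition inner_ell2 :: "'a ell2 \<Rightarrow> 'a ell2 \<Rightarrow> real" is "\<lambda>f g. Re (hinner count_nat f g)" .
definition dist_ell2 :: "'a ell2 \<Rightarrow> 'a ell2 \<Rightarrow> real" where "dist_ell2 a b = norm (a - b)"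
definition sgn_ell2 :: "'a ell2 \<Rightarrow> 'a ell2" where "sgn_ell2 x = scaleR (inverse (norm x)) x"
definition uniformity_ell2 :: "('a ell2 \<times> 'a ell2) filter" where
  "uniformity_ell2 = (INF e\<in>{0 <..}. principal {(x, y). dist x y < e})"
definition open_ell2 :: "'a ell2 set \<Rightarrow> bool"
  where "open_ell2 S = (\<forall>x\<in>S. \<forall>\<^sub>F (x', y) in uniformity. x' = x \<longrightarrow> y \<in> S)"
instance
proof
  fix x y z :: "'a ell2" and r s :: real
  show "x + y + z = x + (y + z)" by transfer (simp add: add.assoc)
  show "x + y = y + x" by transfer (simp add: add.commute)
  show "0 + x = x" by transfer simp
  show "- x + x = 0" by transfer simp
  show "x - y = x + - y" by transfer simp
  show "r *\<^sub>R (x + y) = r *\<^sub>R x + r *\<^sub>R y" by transfer (simp add: scaleR_add_right)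
  show "(r + s) *\<^sub>R x = r *\<^sub>R x + s *\<^sub>R x" by transfer (simp add: scaleR_add_left)
  show "r *\<^sub>R s *\<^sub>R x = (r * s) *\<^sub>R x" by transfer simp
  show "1 *\<^sub>R x = x" by transfer simp
  show "dist x y = norm (x - y)" by (simp add: dist_ell2_def)
  show "sgn x = inverse (norm x) *\<^sub>R x" by (simp add: sgn_ell2_def)
  show "(uniformity :: ('a ell2 \<times> 'a ell2) filter) = (INF e\<in>{0 <..}. principal {(x, y). dist x y < e})"
    by (simp add: uniformity_ell2_def)
  show "open U = (\<forall>x\<in>U. \<forall>\<^sub>F (x', y) in uniformity. x' = x \<longrightarrow> y \<in> U)" for U :: "'a ell2 set"
    by (simp add: open_ell2_def)
  show "inner x y = inner y x"
  proof transfer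
    fix f g :: "nat \<Rightarrow> complex^'a^'a" assume f: "f \<in> L2 count_nat" and g: "g \<in> L2 count_nat"
    show "Re (hinner count_nat f g) = Re (hinner count_nat g f)" using hinner_cnj[OF f g] by simp
  qed
  show "inner (x + y) z = inner x z + inner y z"
    by transfer (simp add: hinner_add_left)
  show "inner (r *\<^sub>R x) y = r * inner x y"
    by transfer (simp add: scaleR_mscale hinner_mscale_left)
  show "0 \<le> inner x x"
    by transfer (simp add: hinner_self integral_nonneg_AE)
  show "(inner x x = 0) = (x = 0)"
  proof transfer
    fix f :: "nat \<Rightarrow> complex^'a^'a" assume f: "f \<in> L2 count_nat"
    have "Re (hinner count_nat f f) = 0 \<longleftrightarrow> l2norm count_nat (\<lambda>x. f x - 0) = 0"
      using f by (simp add: l2norm_def)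
    also have "\<dots> \<longleftrightarrow> aeq count_nat f (\<lambda>k. 0)" using aeq_iff_l2norm[OF f L2_zero] by simp
    also have "\<dots> \<longleftrightarrow> f = (\<lambda>k. 0)" by (simp add: aeq_count_nat)
    finally show "(Re (hinner count_nat f f) = 0) = (f = (\<lambda>k. 0))" .
  qed
  show "norm x = sqrt (inner x x)"
    by transfer (simp add: l2norm_def)
qed
end

lemma power2_norm_ell2_integral: "(norm x)\<^sup>2 = (LINT k|count_nat. (norm (ell2_seq x k))\<^sup>2)"
  by transfer (simp add: l2norm_sq)

lemma ell2_seq_diff: "ell2_seq (x - y) = (\<lambda>k. ell2_seq x k - ell2_seq y k)" by transfer simp
lemma ell2_seq_add: "ell2_seq (x + y) = (\<lambda>k. ell2_seq x k + ell2_seq y k)" by transfer simp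

lemma norm_ell2_diff: "norm (x - y) = l2norm count_nat (\<lambda>k. ell2_seq x k - ell2_seq y k)"
  by (simp add: norm_ell2.rep_eq ell2_seq_diff)

instance ell2 :: (finite) complete_space
proof
  fix X :: "nat \<Rightarrow> 'a ell2"
  assume "Cauchy X"
  then have "\<exists>N. \<forall>i\<ge>N. \<forall>j\<ge>N. l2norm count_nat (\<lambda>k. ell2_seq (X i) k - ell2_seq (X j) k) < e"
    if "e > 0" for e
  proof -
    obtain N where "\<forall>i\<ge>N. \<forall>j\<ge>N. dist (X i) (X j) < e"
      using \<open>Cauchy X\<close> \<open>e > 0\<close> unfolding Cauchy_def by blast
    then show ?thesis
      by (intro exI[of _ N]) (simp add: dist_norm norm_ell2_diff)
  qed
  then obtain f where f: "f \<in> L2 count_nat"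
    and lim: "(\<lambda>n. l2norm count_nat (\<lambda>k. ell2_seq (X n) k - f k)) \<longlonglongrightarrow> 0"
    by (rule L2_complete[of "\<lambda>n. ell2_seq (X n)", OF ell2_seq_L2])
  have "dist (X n) (Ell2 f) = l2norm count_nat (\<lambda>k. ell2_seq (X n) k - f k)" for n
    using norm_ell2_diff[of "X n" "Ell2 f"] Ell2_inverse[OF f] by (simp add: dist_norm)
  with lim have "(\<lambda>n. dist (X n) (Ell2 f)) \<longlonglongrightarrow> 0"
    by simp
  then have "X \<longlonglongrightarrow> Ell2 f"
    by (rule tendsto_dist_iff[THEN iffD2])
  then show "convergent X"
    unfolding convergent_def by blast
qed

instance ell2 :: (finite) banach ..

lemma norm_vec_le_sum: "norm (x::'a::real_normed_vector^'n) \<le> (\<Sum>i\<in>UNIV. norm (x$i))"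
  unfolding norm_vec_def using L2_set_le_sum_abs[of "\<lambda>i. norm (x$i)" UNIV] by simp

lemma norm_matrix_mult_le:
  "norm ((A::complex^'m^'n) ** (B::complex^'p^'m)) \<le>
      (\<Sum>i\<in>UNIV. \<Sum>k\<in>(UNIV::'p set). \<Sum>j\<in>UNIV. cmod (A$i$j)) * norm B"
proof -
  have bj: "cmod (B $ j $ k) \<le> norm B" for j k
  proof -
    have "cmod (B $ j $ k) \<le> norm (B $ j)" by (rule Finite_Cartesian_Product.norm_nth_le)
    also have "\<dots> \<le> norm B" by (rule Finite_Cartesian_Product.norm_nth_le)
    finally show ?thesis .
  qed
  have pt: "cmod ((A ** B) $ i $ k) \<le> (\<Sum>j\<in>UNIV. cmod (A$i$j) * norm B)" for i k
  proof -
    have "cmod ((A ** B) $ i $ k) = cmod (\<Sum>j\<in>UNIV. A$i$j * B$j$k)"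
      by (simp add: matrix_matrix_mult_def)
    also have "\<dots> \<le> (\<Sum>j\<in>UNIV. cmod (A$i$j * B$j$k))" by (rule norm_sum)
    also have "\<dots> \<le> (\<Sum>j\<in>UNIV. cmod (A$i$j) * norm B)"
      by (rule sum_mono) (simp add: norm_mult mult_left_mono bj)
    finally show ?thesis .
  qed
  have "norm (A ** B) \<le> (\<Sum>i\<in>UNIV. norm ((A ** B) $ i))" by (rule norm_vec_le_sum)
  also have "\<dots> \<le> (\<Sum>i\<in>UNIV. \<Sum>k\<in>UNIV. cmod ((A ** B) $ i $ k))"
    by (rule sum_mono) (rule norm_vec_le_sum)
  also have "\<dots> \<le> (\<Sum>i\<in>UNIV. \<Sum>k\<in>(UNIV::'p set). \<Sum>j\<in>UNIV. cmod (A$i$j) * norm B)"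
    by (rule sum_mono, rule sum_mono, rule pt)
  also have "\<dots> = (\<Sum>i\<in>UNIV. \<Sum>k\<in>(UNIV::'p set). \<Sum>j\<in>UNIV. cmod (A$i$j)) * norm B"
    by (simp only: sum_distrib_right)
  finally show ?thesis .
qed

definition ell2_lmult :: "complex^'s^'s \<Rightarrow> 's::finite ell2 \<Rightarrow> 's ell2" where
  "ell2_lmult A x = Ell2 (\<lambda>k. A ** ell2_seq x k)"

lemma ell2_seq_lmult: "ell2_seq (ell2_lmult A x) = (\<lambda>k. A ** ell2_seq x k)"
  unfolding ell2_lmult_def by (rule Ell2_inverse) (simp add: L2_matrix_mult)

lemma ell2_eqI: "ell2_seq x = ell2_seq y \<Longrightarrow> x = y" by (simp add: ell2_seq_inject)

lemma ell2_seq_scaleR: "ell2_seq (r *\<^sub>R x) = (\<lambda>k. r *\<^sub>R ell2_seq x k)" by transfer simp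
lemma ell2_seq_zero: "ell2_seq 0 = (\<lambda>k. 0)" by transfer simp

lemma ell2_lmult_add: "ell2_lmult A (x + y) = ell2_lmult A x + ell2_lmult A y"
  by (rule ell2_eqI) (simp add: ell2_seq_lmult ell2_seq_add matrix_add_ldistrib)
lemma ell2_lmult_scaleR: "ell2_lmult A (r *\<^sub>R x) = r *\<^sub>R ell2_lmult A x"
  by (rule ell2_eqI) (simp add: ell2_seq_lmult ell2_seq_scaleR matrix_scalar_ac scalar_matrix_assoc)
lemma ell2_lmult_one: "ell2_lmult (mat 1) x = x"
  by (rule ell2_eqI) (simp add: ell2_seq_lmult)
lemma ell2_lmult_zero: "ell2_lmult (mat 0) x = 0"
  by (rule ell2_eqI) (simp add: ell2_seq_lmult ell2_seq_zero)
lemma ell2_lmult_of_real: "ell2_lmult (mat (of_real r)) x = r *\<^sub>R x"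
  by (rule ell2_eqI) (simp add: ell2_seq_lmult ell2_seq_scaleR scaleR_mscale mscale_mat)

lemma norm_ell2_lmult_le: "norm (ell2_lmult (A::complex^'s^'s) x) \<le>
    (\<Sum>i\<in>UNIV. \<Sum>k\<in>(UNIV::'s::finite set). \<Sum>j\<in>UNIV. cmod (A$i$j)) * norm x"
proof -
  define K where "K = (\<Sum>i\<in>UNIV. \<Sum>k\<in>(UNIV::'s set). \<Sum>j\<in>UNIV. cmod (A$i$j))"
  have K0: "K \<ge> 0" unfolding K_def by (simp add: sum_nonneg)
  have L: "ell2_seq x \<in> L2 count_nat" by simp
  have i1: "integrable count_nat (\<lambda>k. (norm (ell2_seq x k))\<^sup>2)"
    using L by (simp add: L2_iff_square_integrable square_integrable_def)
  have i2: "integrable count_nat (\<lambda>k. (norm (A ** ell2_seq x k))\<^sup>2)"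
    using L2_matrix_mult[OF L, of A] by (simp add: L2_iff_square_integrable square_integrable_def)
  have pw: "(norm (A ** ell2_seq x k))\<^sup>2 \<le> K\<^sup>2 * (norm (ell2_seq x k))\<^sup>2" for k
  proof -
    have "norm (A ** ell2_seq x k) \<le> K * norm (ell2_seq x k)" unfolding K_def
      by (rule norm_matrix_mult_le)
    then have "(norm (A ** ell2_seq x k))\<^sup>2 \<le> (K * norm (ell2_seq x k))\<^sup>2" by (rule power_mono) simp
    then show ?thesis by (simp add: power_mult_distrib)
  qed
  have "(norm (ell2_lmult A x))\<^sup>2 = (LINT k|count_nat. (norm (A ** ell2_seq x k))\<^sup>2)"
    by (simp add: power2_norm_ell2_integral ell2_seq_lmult)
  also have "\<dots> \<le> (LINT k|count_nat. K\<^sup>2 * (norm (ell2_seq x k))\<^sup>2)"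
    by (rule integral_mono) (use i1 i2 pw in auto)
  also have "\<dots> = K\<^sup>2 * (norm x)\<^sup>2" by (simp add: power2_norm_ell2_integral)
  also have "\<dots> = (K * norm x)\<^sup>2" by (simp add: power_mult_distrib)
  finally have "(norm (ell2_lmult A x))\<^sup>2 \<le> (K * norm x)\<^sup>2" .
  then have "norm (ell2_lmult A x) \<le> K * norm x" using K0 by (simp add: power2_le_iff_abs_le)
  then show ?thesis by (simp add: K_def)
qed

lemma bounded_linear_ell2_lmult:
  "bounded_linear (ell2_lmult (A::complex^'s^'s) :: 's::finite ell2 \<Rightarrow> 's ell2)"
proof (rule bounded_linear_intro[where K="(\<Sum>i\<in>UNIV. \<Sum>k\<in>(UNIV::'s set). \<Sum>j\<in>UNIV. cmod (A$i$j))"])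
  fix x y :: "'s ell2" and r :: real
  show "ell2_lmult A (x + y) = ell2_lmult A x + ell2_lmult A y" by (rule ell2_lmult_add)
  show "ell2_lmult A (r *\<^sub>R x) = r *\<^sub>R ell2_lmult A x" by (rule ell2_lmult_scaleR)
  show "norm (ell2_lmult A x) \<le> norm x * (\<Sum>i\<in>UNIV. \<Sum>k\<in>(UNIV::'s set). \<Sum>j\<in>UNIV. cmod (A$i$j))"
    using norm_ell2_lmult_le[of A x] by (simp only: mult.commute)
qed

definition lmult_op :: "complex^'s^'s \<Rightarrow> 's::finite ell2 endo" where
  "lmult_op A = endo_of_fun (ell2_lmult A)"

lemma lmult_op_apply[simp]: "lmult_op A $$ x = ell2_lmult A x"
  unfolding lmult_op_def by (rule endo_apply_endo_of_fun[OF bounded_linear_ell2_lmult])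

lemma L2_count_nat_iff:
  "(c :: nat \<Rightarrow> complex^'r^'s) \<in> L2 count_nat \<longleftrightarrow>
    (\<forall>i j. summable (\<lambda>k. (cmod (c k $ i $ j))\<^sup>2))"
  unfolding L2_def by (simp add: integrable_count_space_nat_iff)

lemma L2_count_natI: "summable (\<lambda>k. (norm ((c :: nat \<Rightarrow> complex^'r^'s) k))\<^sup>2) \<Longrightarrow> c \<in> L2 count_nat"
  unfolding L2_count_nat_iff
proof (intro allI)
  fix i j assume s: "summable (\<lambda>k. (norm (c k))\<^sup>2)"
  show "summable (\<lambda>k. (cmod (c k $ i $ j))\<^sup>2)"
    by (rule summable_comparison_test[OF _ s]) (auto intro!: exI[of _ 0] power_mono norm_matrix_entry_le)
qed

lemma summable_norm_L2_count_nat: "c \<in> L2 count_nat \<Longrightarrow>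
    summable (\<lambda>k. (norm ((c :: nat \<Rightarrow> complex^'r^'s) k))\<^sup>2)"
  unfolding L2_iff_square_integrable square_integrable_def
  by (simp add: integrable_count_space_nat_iff)

lemma power2_norm_ell2: "(norm x)\<^sup>2 = (\<Sum>k. (norm (ell2_seq x k))\<^sup>2)"
proof -
  have "integrable count_nat (\<lambda>k. (norm (ell2_seq x k))\<^sup>2)"
    using ell2_seq_L2[of x] by (simp add: L2_iff_square_integrable square_integrable_def)
  then show ?thesis by (simp add: power2_norm_ell2_integral integral_count_space_nat)
qed

lemma suminf_tail_tendsto_0:
  fixes a :: "nat \<Rightarrow> real"
  assumes s: "summable a"
  shows "(\<lambda>n. \<Sum>k. if k < n then 0 else a k) \<longlonglongrightarrow> 0"
proof -
  have e: "(\<Sum>k. if k < n then 0 else a k) = suminf a - (\<Sum>k<n. a k)" for n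
  proof -
    have f: "summable (\<lambda>k. if k < n then a k else 0)"
      by (rule summable_finite[of "{..<n}"]) auto
    have "(\<Sum>k. if k < n then 0 else a k) = (\<Sum>k. a k - (if k < n then a k else 0))"
      by (rule suminf_cong) auto
    also have "\<dots> = suminf a - (\<Sum>k. if k < n then a k else 0)" using suminf_diff[OF s f] by simp
    also have "(\<Sum>k. if k < n then a k else 0) = (\<Sum>k<n. (if k < n then a k else 0))"
      by (rule suminf_finite) auto
    finally show ?thesis by simp
  qed
  have "(\<lambda>n. suminf a - (\<Sum>k<n. a k)) \<longlonglongrightarrow> suminf a - suminf a"
    by (intro tendsto_diff tendsto_const summable_LIMSEQ[OF s])
  then show ?thesis unfolding e by simp
qed

lemma bounded_opD:
  assumes "bounded_op M U"
  shows "\<And>f. f \<in> L2 M \<Longrightarrow> U f \<in> L2 M"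
    and "\<And>f g. f \<in> L2 M \<Longrightarrow> g \<in> L2 M \<Longrightarrow> aeq M f g \<Longrightarrow> aeq M (U f) (U g)"
    and "\<And>a b f g. f \<in> L2 M \<Longrightarrow> g \<in> L2 M \<Longrightarrow>
          aeq M (U (\<lambda>x. mscale a (f x) + mscale b (g x))) (\<lambda>x. mscale a (U f x) + mscale b (U g x))"
    and "\<exists>C. \<forall>f\<in>L2 M. l2norm M (U f) \<le> C * l2norm M f"
  using assms unfolding bounded_op_def by blast+


lemma L2_mscale_combination: "f \<in> L2 M \<Longrightarrow> g \<in> L2 M \<Longrightarrow> (\<lambda>x. mscale a (f x) + mscale b (g x)) \<in> L2 M"
  by (intro L2_add L2_mscale)


section \<open>Coordinates with respect to a matrix-valued orthonormal basis\<close>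

locale matrix_onb =
  fixes M :: "'g measure" and E :: "nat \<Rightarrow> 'g \<Rightarrow> complex^'r::finite^'s::finite"
  assumes onb: "mat_onb M E"
begin

lemma onb_L2: "E k \<in> L2 M" using onb by (simp add: mat_onb_def)
lemma onb_orthonormal: "minner M (E k) (E j) = (if k = j then mat 1 else 0)"
  using onb by (simp add: mat_onb_def)
lemma onb_expansion: "f \<in> L2 M \<Longrightarrow> (\<lambda>n. l2norm M (\<lambda>x. f x - (\<Sum>k<n. minner M f (E k) ** E k x))) \<longlonglongrightarrow> 0"
  using onb by (simp add: mat_onb_def)

definition fourier_coeff :: "('g \<Rightarrow> complex^'r^'s) \<Rightarrow> nat \<Rightarrow> complex^'s^'s" where
  "fourier_coeff f k = minner M f (E k)"

definition partial_sum :: "nat \<Rightarrow> (nat \<Rightarrow> complex^'s^'s) \<Rightarrow> 'g \<Rightarrow> complex^'r^'s" where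
  "partial_sum n c = (\<lambda>x. \<Sum>k<n. c k ** E k x)"

lemma partial_sum_L2: "partial_sum n c \<in> L2 M"
  unfolding partial_sum_def by (intro L2_sum L2_matrix_mult onb_L2) auto

lemma minner_basis_partial_sum: "k < n \<Longrightarrow> minner M (E k) (partial_sum n c) = ctrans (c k)"
proof -
  assume k: "k < n"
  have "minner M (E k) (partial_sum n c) = (\<Sum>j<n. minner M (E k) (\<lambda>x. c j ** E j x))"
    unfolding partial_sum_def by (rule minner_sum_right) (auto intro: L2_matrix_mult onb_L2)
  also have "\<dots> = (\<Sum>j<n. (if k = j then ctrans (c j) else 0))"
    by (rule sum.cong) (auto simp: minner_mult_right onb_L2 onb_orthonormal)
  also have "\<dots> = ctrans (c k)" using k by simp
  finally show ?thesis .
qed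

lemma fourier_coeff_partial_sum: "fourier_coeff (partial_sum n c) j = (if j < n then c j else 0)"
proof -
  have "fourier_coeff (partial_sum n c) j = (\<Sum>k<n. minner M (\<lambda>x. c k ** E k x) (E j))"
    unfolding fourier_coeff_def partial_sum_def
    by (rule minner_sum_left) (auto intro: L2_matrix_mult onb_L2)
  also have "\<dots> = (\<Sum>k<n. (if k = j then c k else 0))"
    by (rule sum.cong) (auto simp: minner_mult_left onb_L2 onb_orthonormal)
  also have "\<dots> = (if j < n then c j else 0)" by simp
  finally show ?thesis .
qed

lemma hinner_partial_sum_left: "g \<in> L2 M \<Longrightarrow>
    hinner M (partial_sum n c) g = (\<Sum>k<n. mtrace (c k ** minner M (E k) g))"
proof -
  assume g: "g \<in> L2 M"
  have "minner M (partial_sum n c) g = (\<Sum>k<n. minner M (\<lambda>x. c k ** E k x) g)"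
    unfolding partial_sum_def by (rule minner_sum_left) (auto intro: L2_matrix_mult onb_L2 g)
  also have "\<dots> = (\<Sum>k<n. c k ** minner M (E k) g)"
    by (rule sum.cong) (auto simp: minner_mult_left onb_L2 g)
  finally show ?thesis by (simp add: hinner_def mtrace_sum)
qed

lemma l2norm_remainder_sq:
  assumes f: "f \<in> L2 M"
  shows "(l2norm M (\<lambda>x. f x - partial_sum n (fourier_coeff f) x))\<^sup>2
      = (l2norm M f)\<^sup>2 - (\<Sum>k<n. (norm (fourier_coeff f k))\<^sup>2)"
proof -
  let ?P = "partial_sum n (fourier_coeff f)"
  have P: "?P \<in> L2 M" by (rule partial_sum_L2)
  have Pf: "hinner M ?P f = of_real (\<Sum>k<n. (norm (fourier_coeff f k))\<^sup>2)"
  proof -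
    have "hinner M ?P f = (\<Sum>k<n. mtrace (fourier_coeff f k ** ctrans (fourier_coeff f k)))"
      unfolding hinner_partial_sum_left[OF f]
        using minner_ctrans[OF f onb_L2] by (simp add: fourier_coeff_def)
    then show ?thesis by (simp add: mtrace_mult_ctrans_self)
  qed
  have fP: "hinner M f ?P = of_real (\<Sum>k<n. (norm (fourier_coeff f k))\<^sup>2)"
    using hinner_cnj[OF P f] Pf by simp
  have PP': "hinner M ?P ?P = of_real (\<Sum>k<n. (norm (fourier_coeff f k))\<^sup>2)"
  proof -
    have "hinner M ?P ?P = (\<Sum>k<n. mtrace (fourier_coeff f k ** ctrans (fourier_coeff f k)))"
      unfolding hinner_partial_sum_left[OF P]
      by (rule sum.cong) (auto simp: minner_basis_partial_sum)
    then show ?thesis by (simp add: mtrace_mult_ctrans_self)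
  qed
  have d: "(\<lambda>x. f x - ?P x) \<in> L2 M" using f P by (rule L2_diff)
  have "hinner M (\<lambda>x. f x - ?P x) (\<lambda>x. f x - ?P x)
      = (hinner M f f - hinner M f ?P) - (hinner M ?P f - hinner M ?P ?P)"
    using f P d by (simp add: hinner_diff_left hinner_diff_right)
  also have "\<dots> = hinner M f f - of_real (\<Sum>k<n. (norm (fourier_coeff f k))\<^sup>2)"
    using Pf fP PP' by simp
  finally have "Re (hinner M (\<lambda>x. f x - ?P x) (\<lambda>x. f x - ?P x))
      = Re (hinner M f f) - (\<Sum>k<n. (norm (fourier_coeff f k))\<^sup>2)"
    by simp
  then show ?thesis using d f by (simp add: l2norm_sq hinner_self)
qed

lemma Parseval: "f \<in> L2 M \<Longrightarrow> (\<lambda>k. (norm (fourier_coeff f k))\<^sup>2) sums (l2norm M f)\<^sup>2"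
proof -
  assume f: "f \<in> L2 M"
  have "(\<lambda>n. l2norm M (\<lambda>x. f x - partial_sum n (fourier_coeff f) x)) \<longlonglongrightarrow> 0"
    using onb_expansion[OF f] by (simp add: partial_sum_def fourier_coeff_def)
  then have "(\<lambda>n. (l2norm M (\<lambda>x. f x - partial_sum n (fourier_coeff f) x))\<^sup>2) \<longlonglongrightarrow> 0"
    using tendsto_power[of _ 0 sequentially 2] by fastforce
  then have "(\<lambda>n. (l2norm M f)\<^sup>2 - (\<Sum>k<n. (norm (fourier_coeff f k))\<^sup>2)) \<longlonglongrightarrow> 0"
    by (simp add: l2norm_remainder_sq[OF f])
  then have "(\<lambda>n. (l2norm M f)\<^sup>2 - ((l2norm M f)\<^sup>2 - (\<Sum>k<n. (norm (fourier_coeff f k))\<^sup>2)))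
      \<longlonglongrightarrow> (l2norm M f)\<^sup>2 - 0"
    by (intro tendsto_diff tendsto_const)
  then show ?thesis unfolding sums_def by simp
qed

lemma fourier_coeff_L2: "f \<in> L2 M \<Longrightarrow> fourier_coeff f \<in> L2 count_nat"
  by (rule L2_count_natI) (rule sums_summable[OF Parseval])

definition analysis :: "('g \<Rightarrow> complex^'r^'s) \<Rightarrow> 's ell2" where "analysis f = Ell2 (fourier_coeff f)"

lemma ell2_seq_analysis: "f \<in> L2 M \<Longrightarrow> ell2_seq (analysis f) = fourier_coeff f"
  unfolding analysis_def by (rule Ell2_inverse) (rule fourier_coeff_L2)

lemma norm_analysis: "f \<in> L2 M \<Longrightarrow> norm (analysis f) = l2norm M f"
proof -
  assume f: "f \<in> L2 M"
  have "(norm (analysis f))\<^sup>2 = (\<Sum>k. (norm (fourier_coeff f k))\<^sup>2)"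
    by (simp add: power2_norm_ell2 ell2_seq_analysis[OF f])
  also have "\<dots> = (l2norm M f)\<^sup>2" using Parseval[OF f] by (simp add: sums_iff)
  finally show ?thesis using l2norm_nonneg[OF f] by (simp add: power2_eq_iff_nonneg)
qed

lemma analysis_add: "f \<in> L2 M \<Longrightarrow> g \<in> L2 M \<Longrightarrow> analysis (\<lambda>x. f x + g x) = analysis f + analysis g"
  by (rule ell2_eqI)
    (simp add: ell2_seq_add ell2_seq_analysis L2_add fourier_coeff_def minner_add_left onb_L2 fun_eq_iff)

lemma analysis_diff: "f \<in> L2 M \<Longrightarrow> g \<in> L2 M \<Longrightarrow> analysis (\<lambda>x. f x - g x) = analysis f - analysis g"
  by (rule ell2_eqI)
    (simp add: ell2_seq_diff ell2_seq_analysis L2_diff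
      fourier_coeff_def minner_diff_left onb_L2 fun_eq_iff)

lemma analysis_matrix_mult: "f \<in> L2 M \<Longrightarrow> analysis (\<lambda>x. A ** f x) = ell2_lmult A (analysis f)"
  by (rule ell2_eqI)
    (simp add: ell2_seq_lmult ell2_seq_analysis L2_matrix_mult
      fourier_coeff_def minner_mult_left onb_L2 fun_eq_iff)

lemma analysis_mscale: "f \<in> L2 M \<Longrightarrow> analysis (\<lambda>x. mscale c (f x)) = ell2_lmult (mat c) (analysis f)"
  by (simp add: mscale_mat analysis_matrix_mult)

lemma analysis_aeq: "f \<in> L2 M \<Longrightarrow> g \<in> L2 M \<Longrightarrow> aeq M f g \<Longrightarrow> analysis f = analysis g"
  unfolding analysis_def fourier_coeff_def by (simp add: minner_aeq_left onb_L2)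

lemma aeq_if_analysis_eq: "f \<in> L2 M \<Longrightarrow> g \<in> L2 M \<Longrightarrow> analysis f = analysis g \<Longrightarrow> aeq M f g"
proof -
  assume f: "f \<in> L2 M" and g: "g \<in> L2 M" and e: "analysis f = analysis g"
  have "l2norm M (\<lambda>x. f x - g x) = norm (analysis (\<lambda>x. f x - g x))"
    using L2_diff[OF f g] by (simp add: norm_analysis)
  also have "\<dots> = 0" using e f g by (simp add: analysis_diff)
  finally show ?thesis using aeq_iff_l2norm[OF f g] by simp
qed

lemma inner_analysis: "f \<in> L2 M \<Longrightarrow> g \<in> L2 M \<Longrightarrow> Re (hinner M f g) = inner (analysis f) (analysis g)"
  by (simp add: Re_hinner_polarization dot_norm analysis_add[symmetric] norm_analysis L2_add)

lemma hinner_analysis: "f \<in> L2 M \<Longrightarrow> g \<in> L2 M \<Longrightarrow>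
    hinner M f g
      = Complex (inner (analysis f) (analysis g)) (inner (analysis f) (ell2_lmult (mat \<i>) (analysis g)))"
proof -
  assume f: "f \<in> L2 M" and g: "g \<in> L2 M"
  have "Im (hinner M f g) = inner (analysis f) (ell2_lmult (mat \<i>) (analysis g))"
    using f g by (simp add: Im_hinner_eq_Re inner_analysis L2_mscale analysis_mscale)
  then show ?thesis using f g by (simp add: complex_eq_iff inner_analysis)
qed

lemma analysis_partial_sum: "analysis (partial_sum n c) = Ell2 (\<lambda>k. if k < n then c k else 0)"
  unfolding analysis_def by (simp add: fourier_coeff_partial_sum[abs_def])

lemma analysis_surj: "\<exists>f\<in>L2 M. analysis f = h"
proof -
  define c where "c = ell2_seq h"
  have h_c: "ell2_seq h = c"
    by (simp add: c_def)
  have sum_c: "summable (\<lambda>k. (norm (c k))\<^sup>2)"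
    unfolding c_def by (rule summable_norm_L2_count_nat[OF ell2_seq_L2])
  define F where "F n = partial_sum n c" for n
  have F_L2: "F n \<in> L2 M" for n
    unfolding F_def by (rule partial_sum_L2)
  have truncation_L2: "(\<lambda>k. if k < n then c k else 0) \<in> L2 count_nat" for n
    by (rule L2_count_natI, rule summable_comparison_test[OF _ sum_c]) auto
  have "(norm (h - analysis (F n)))\<^sup>2 = (\<Sum>k. if k < n then 0 else (norm (c k))\<^sup>2)" for n
  proof -
    have "(norm (h - analysis (F n)))\<^sup>2 = (\<Sum>k. (norm (c k - (if k < n then c k else 0)))\<^sup>2)"
      by (simp add: power2_norm_ell2 ell2_seq_diff F_def
          analysis_partial_sum Ell2_inverse[OF truncation_L2] h_c)
    also have "\<dots> = (\<Sum>k. if k < n then 0 else (norm (c k))\<^sup>2)"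
      by (rule suminf_cong) auto
    finally show ?thesis .
  qed
  then have "(\<lambda>n. sqrt ((norm (h - analysis (F n)))\<^sup>2)) \<longlonglongrightarrow> sqrt 0"
    using suminf_tail_tendsto_0[OF sum_c] by (intro tendsto_real_sqrt) simp
  then have lim_F: "(\<lambda>n. analysis (F n)) \<longlonglongrightarrow> h"
    by (simp add: tendsto_iff dist_norm norm_minus_commute)
  have dist_F: "dist (analysis (F i)) (analysis f) = l2norm M (\<lambda>x. F i x - f x)" if "f \<in> L2 M" for i f
    using that F_L2 by (simp add: dist_norm analysis_diff[symmetric] norm_analysis L2_diff)
  obtain f where "f \<in> L2 M" and "(\<lambda>n. l2norm M (\<lambda>x. F n x - f x)) \<longlonglongrightarrow> 0"
  proof (rule L2_complete[OF F_L2])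
    show "\<exists>N. \<forall>i\<ge>N. \<forall>j\<ge>N. l2norm M (\<lambda>x. F i x - F j x) < e" if "e > 0" for e
      using LIMSEQ_imp_Cauchy[OF lim_F] that unfolding Cauchy_def by (simp add: dist_F F_L2)
  qed
  then have "(\<lambda>n. dist (analysis (F n)) (analysis f)) \<longlonglongrightarrow> 0"
    by (simp add: dist_F)
  then have "(\<lambda>n. analysis (F n)) \<longlonglongrightarrow> analysis f"
    by (rule tendsto_dist_iff[THEN iffD2])
  then show ?thesis
    using LIMSEQ_unique[OF _ lim_F] \<open>f \<in> L2 M\<close> by blast
qed

definition synthesis :: "'s ell2 \<Rightarrow> ('g \<Rightarrow> complex^'r^'s)" where
  "synthesis h = (SOME f. f \<in> L2 M \<and> analysis f = h)"

lemma synthesis_L2: "synthesis h \<in> L2 M"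
  and analysis_synthesis: "analysis (synthesis h) = h"
  using someI_ex[OF analysis_surj[of h, unfolded Bex_def]] by (simp_all add: synthesis_def)
lemma synthesis_analysis_aeq: "f \<in> L2 M \<Longrightarrow> aeq M (synthesis (analysis f)) f"
  by (rule aeq_if_analysis_eq) (auto simp: synthesis_L2 analysis_synthesis)

definition ell2_op :: "(('g \<Rightarrow> complex^'r^'s) \<Rightarrow> ('g \<Rightarrow> complex^'r^'s)) \<Rightarrow> 's ell2 endo" where
  "ell2_op U = endo_of_fun (\<lambda>h. analysis (U (synthesis h)))"

lemma analysis_mscale_combination: "f \<in> L2 M \<Longrightarrow> g \<in> L2 M \<Longrightarrow>
    analysis (\<lambda>x. mscale a (f x) + mscale b (g x)) = ell2_lmult (mat a) (analysis f) +
        ell2_lmult (mat b) (analysis g)"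
  by (simp add: analysis_add L2_mscale analysis_mscale)

lemma ell2_op_combination:
  assumes U: "bounded_op M U"
  shows "analysis (U (synthesis (ell2_lmult (mat a) h1 + ell2_lmult (mat b) h2)))
      = ell2_lmult (mat a) (analysis (U (synthesis h1))) +
        ell2_lmult (mat b) (analysis (U (synthesis h2)))"
proof -
  note UD = bounded_opD[OF U]
  let ?c = "\<lambda>x. mscale a (synthesis h1 x) + mscale b (synthesis h2 x)"
  have cL: "?c \<in> L2 M" by (intro L2_mscale_combination synthesis_L2)
  have "aeq M (synthesis (ell2_lmult (mat a) h1 + ell2_lmult (mat b) h2)) ?c"
    by (rule aeq_if_analysis_eq)
      (auto simp: synthesis_L2 cL analysis_synthesis analysis_mscale_combination)
  then have "aeq M (U (synthesis (ell2_lmult (mat a) h1 + ell2_lmult (mat b) h2))) (U ?c)"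
    by (intro UD(2) synthesis_L2 cL)
  then have "analysis (U (synthesis (ell2_lmult (mat a) h1 + ell2_lmult (mat b) h2))) = analysis (U ?c)"
    by (intro analysis_aeq UD(1) synthesis_L2 cL)
  also have "\<dots> = analysis (\<lambda>x. mscale a (U (synthesis h1) x) + mscale b (U (synthesis h2) x))"
    by (intro analysis_aeq UD(1) cL L2_mscale_combination synthesis_L2 UD(3))
  also have "\<dots>
      = ell2_lmult (mat a) (analysis (U (synthesis h1))) +
        ell2_lmult (mat b) (analysis (U (synthesis h2)))"
    by (intro analysis_mscale_combination UD(1) synthesis_L2)
  finally show ?thesis .
qed

lemma bounded_linear_ell2_op:
  assumes U: "bounded_op M U"
  shows "bounded_linear (\<lambda>h. analysis (U (synthesis h)))"
proof -
  note UD = bounded_opD[OF U]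
  obtain C where C: "\<And>f. f \<in> L2 M \<Longrightarrow> l2norm M (U f) \<le> C * l2norm M f" using UD(4) by blast
  show ?thesis
  proof (rule bounded_linear_intro[where K=C])
    fix x y :: "'s ell2" and r :: real
    show "analysis (U (synthesis (x + y))) = analysis (U (synthesis x)) + analysis (U (synthesis y))"
      using ell2_op_combination[OF U, of 1 x 1 y] unfolding ell2_lmult_one .
    show "analysis (U (synthesis (r *\<^sub>R x))) = r *\<^sub>R analysis (U (synthesis x))"
      using ell2_op_combination[OF U, of "of_real r" x 0 x]
        unfolding ell2_lmult_of_real ell2_lmult_zero add_0_right .
    show "norm (analysis (U (synthesis x))) \<le> norm x * C"
    proof -
      have e1: "l2norm M (synthesis x) = norm x"
        using norm_analysis[OF synthesis_L2[of x]] analysis_synthesis by simp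
      have e2: "norm (analysis (U (synthesis x))) = l2norm M (U (synthesis x))"
        by (rule norm_analysis[OF UD(1)[OF synthesis_L2]])
      show ?thesis using C[OF synthesis_L2[of x]] unfolding e1 e2 by (simp add: mult.commute)
    qed
  qed
qed

lemma ell2_op_apply: "bounded_op M U \<Longrightarrow> ell2_op U $$ h = analysis (U (synthesis h))"
  unfolding ell2_op_def by (rule endo_apply_endo_of_fun[OF bounded_linear_ell2_op])

lemma ell2_op_apply_analysis: "bounded_op M U \<Longrightarrow> f \<in> L2 M \<Longrightarrow> ell2_op U $$ analysis f = analysis (U f)"
proof -
  assume U: "bounded_op M U" and f: "f \<in> L2 M"
  have "aeq M (synthesis (analysis f)) f" by (rule synthesis_analysis_aeq[OF f])
  then have a: "aeq M (U (synthesis (analysis f))) (U f)"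
    by (rule bounded_opD(2)[OF U synthesis_L2 f])
  have "analysis (U (synthesis (analysis f))) = analysis (U f)"
    by (rule analysis_aeq[OF bounded_opD(1)[OF U synthesis_L2] bounded_opD(1)[OF U f] a])
  then show ?thesis by (simp only: ell2_op_apply[OF U])
qed

lemma endo_eqI_analysis: "(\<And>f. f \<in> L2 M \<Longrightarrow> A $$ analysis f = B $$ analysis f) \<Longrightarrow> A = B"
  by (rule endo_eqI) (metis analysis_synthesis synthesis_L2)

lemma bounded_op_if_represented:
  assumes UL: "\<And>f. f \<in> L2 M \<Longrightarrow> U f \<in> L2 M"
    and rep: "\<And>f. f \<in> L2 M \<Longrightarrow> analysis (U f) = B $$ analysis f"
    and cm: "\<And>c. B * lmult_op (mat c) = lmult_op (mat c) * B"
  shows "bounded_op M U"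
  unfolding bounded_op_def
proof (intro conjI ballI allI impI)
  show "U f \<in> L2 M" if "f \<in> L2 M" for f using UL that .
  show "aeq M (U f) (U g)" if "f \<in> L2 M" "g \<in> L2 M" "aeq M f g" for f g
    by (rule aeq_if_analysis_eq) (use that UL rep analysis_aeq in auto)
  show "aeq M (U (\<lambda>x. mscale a (f x) + mscale b (g x))) (\<lambda>x. mscale a (U f x) + mscale b (U g x))"
    if f: "f \<in> L2 M" and g: "g \<in> L2 M" for a b f g
  proof (rule aeq_if_analysis_eq)
    show "U (\<lambda>x. mscale a (f x) + mscale b (g x)) \<in> L2 M" by (intro UL L2_mscale_combination f g)
    show "(\<lambda>x. mscale a (U f x) + mscale b (U g x)) \<in> L2 M" by (intro L2_mscale_combination UL f g)
    have ca: "B $$ ell2_lmult (mat c) x = ell2_lmult (mat c) (B $$ x)" for c x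
      using cm[of c] by (metis lmult_op_apply endo_apply_simps(1))
    show "analysis (U (\<lambda>x. mscale a (f x) + mscale b (g x)))
        = analysis (\<lambda>x. mscale a (U f x) + mscale b (U g x))"
      using f g by (simp add: rep L2_mscale_combination analysis_mscale_combination UL ca)
  qed
  show "\<exists>C. \<forall>f\<in>L2 M. l2norm M (U f) \<le> C * l2norm M f"
  proof (intro exI ballI)
    fix f :: "'g \<Rightarrow> complex^'r^'s" assume f: "f \<in> L2 M"
    have "l2norm M (U f) = norm (B $$ analysis f)"
      using f by (simp add: norm_analysis[symmetric] UL rep)
    also have "\<dots> \<le> norm B * norm (analysis f)" by (rule norm_endo_apply)
    finally show "l2norm M (U f) \<le> norm B * l2norm M f" using f by (simp add: norm_analysis)
  qed
qed

text \<open>\<open>Im (hinner M f g) = Re (hinner M f (i g))\<close>, so commuting with multiplication by \<open>i\<close>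
  turns real self-adjointness of \<open>B\<close> into self-adjointness for the complex inner product.\<close>

lemma hinner_represented:
  assumes UL: "\<And>f. f \<in> L2 M \<Longrightarrow> U f \<in> L2 M"
    and rep: "\<And>f. f \<in> L2 M \<Longrightarrow> analysis (U f) = B $$ analysis f"
    and cm: "B * lmult_op (mat \<i>) = lmult_op (mat \<i>) * B"
    and saB: "endo_selfadjoint B"
    and f: "f \<in> L2 M" and g: "g \<in> L2 M"
  shows "hinner M (U f) g = hinner M f (U g)"
proof -
  have ca: "B $$ ell2_lmult (mat \<i>) x = ell2_lmult (mat \<i>) (B $$ x)" for x
    using cm by (metis lmult_op_apply endo_apply_simps(1))
  have s: "inner (B $$ x) y = inner x (B $$ y)" for x y
    using saB by (simp add: endo_selfadjoint_def)
  show ?thesis using f g UL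
    by (simp add: hinner_analysis rep s ca)
qed

text \<open>Each entry of \<^const>\<open>minner\<close> is a trace inner product after left multiplication by a
  matrix unit, with which \<open>B\<close> commutes.\<close>

lemma minner_represented:
  assumes UL: "\<And>f. f \<in> L2 M \<Longrightarrow> U f \<in> L2 M"
    and rep: "\<And>f. f \<in> L2 M \<Longrightarrow> analysis (U f) = B $$ analysis f"
    and cm: "\<And>A. B * lmult_op A = lmult_op A * B"
    and saB: "endo_selfadjoint B"
    and f: "f \<in> L2 M" and g: "g \<in> L2 M"
  shows "minner M (U f) g = minner M f (U g)"
proof -
  have ca: "B $$ ell2_lmult A x = ell2_lmult A (B $$ x)" for A x
    using cm[of A] by (metis lmult_op_apply endo_apply_simps(1))
  have "minner M (U f) g $ a $ b = minner M f (U g) $ a $ b" for a b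
  proof -
    let ?m = "matrix_unit b a"
    have mf: "(\<lambda>x. ?m ** f x) \<in> L2 M" using f by (rule L2_matrix_mult)
    have "aeq M (\<lambda>x. ?m ** U f x) (U (\<lambda>x. ?m ** f x))"
      by (rule aeq_if_analysis_eq)
        (use f mf UL in \<open>auto simp: L2_matrix_mult analysis_matrix_mult rep ca\<close>)
    then have "minner M (U f) g $ a $ b = hinner M (U (\<lambda>x. ?m ** f x)) g"
      using f g UL mf by (simp add: minner_entry_eq_hinner hinner_aeq_left L2_matrix_mult)
    also have "\<dots> = hinner M (\<lambda>x. ?m ** f x) (U g)"
      by (rule hinner_represented[OF UL rep cm saB mf g])
    also have "\<dots> = minner M f (U g) $ a $ b" using f g UL by (simp add: minner_entry_eq_hinner)
    finally show ?thesis .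
  qed
  then show ?thesis by (simp add: vec_eq_iff)
qed

lemma mat_riesz_basis_if_represented:
  assumes UL: "\<And>f. f \<in> L2 M \<Longrightarrow> U f \<in> L2 M"
    and rep: "\<And>f. f \<in> L2 M \<Longrightarrow> analysis (U f) = B $$ analysis f"
    and cm: "\<And>A. B * lmult_op A = lmult_op A * B"
    and saB: "endo_selfadjoint B" and inv: "endo_invertible B"
  shows "mat_riesz_basis M (\<lambda>k. U (E k))"
proof -
  have bU: "bounded_op M U" by (rule bounded_op_if_represented[OF UL rep cm])
  obtain C where C1: "B * C = 1" and C2: "C * B = 1" using inv by (auto simp: endo_invertible_def)
  have bij: "bij_op M U"
    unfolding bij_op_def
  proof (intro conjI ballI impI)
    fix f g :: "'g \<Rightarrow> complex^'r^'s" assume f: "f \<in> L2 M" and g: "g \<in> L2 M" and a: "aeq M (U f) (U g)"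
    have "B $$ analysis f = B $$ analysis g"
      using analysis_aeq[OF UL[OF f] UL[OF g] a] f g by (simp add: rep)
    then have "C $$ (B $$ analysis f) = C $$ (B $$ analysis g)" by simp
    then have "analysis f = analysis g" using C2 by (metis endo_apply_simps(1) endo_apply_simps(2))
    then show "aeq M f g" by (rule aeq_if_analysis_eq[OF f g])
  next
    fix g :: "'g \<Rightarrow> complex^'r^'s" assume g: "g \<in> L2 M"
    define f where "f = synthesis (C $$ analysis g)"
    have f: "f \<in> L2 M" unfolding f_def by (rule synthesis_L2)
    have "analysis (U f) = B $$ (C $$ analysis g)"
      using f by (simp add: rep f_def analysis_synthesis)
    also have "\<dots> = analysis g" using C1 by (metis endo_apply_simps(1) endo_apply_simps(2))
    finally have "aeq M (U f) g" by (rule aeq_if_analysis_eq[OF UL[OF f] g])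
    then show "\<exists>f\<in>L2 M. aeq M (U f) g" using f by blast
  qed
  have hU: "is_hadjoint M U U"
    unfolding is_hadjoint_def using bU hinner_represented[OF UL rep cm saB] by blast
  have mU: "mat_adjointable M U"
    unfolding mat_adjointable_def using hU minner_represented[OF UL rep cm saB] by blast
  show ?thesis
    unfolding mat_riesz_basis_def
    by (intro exI[of _ E] exI[of _ U] conjI allI onb bU bij mU) (simp add: aeq_def)
qed

lemma endo_selfadjoint_ell2_op:
  assumes "self_adjoint_op M U"
  shows "endo_selfadjoint (ell2_op U)"
proof -
  have U: "bounded_op M U" "\<And>f g. f \<in> L2 M \<Longrightarrow> g \<in> L2 M \<Longrightarrow> hinner M (U f) g = hinner M f (U g)"
    using assms by (auto simp: self_adjoint_op_def is_hadjoint_def)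
  have "inner (ell2_op U $$ analysis (synthesis x)) (analysis (synthesis y))
      = inner (analysis (synthesis x)) (ell2_op U $$ analysis (synthesis y))" for x y
    using U
    by (simp add: ell2_op_apply_analysis synthesis_L2 bounded_opD(1) inner_analysis[symmetric])
  then show ?thesis
    by (simp add: endo_selfadjoint_def analysis_synthesis)
qed

lemma endo_positive_ell2_op:
  assumes "positive_op M P"
  shows "endo_positive (ell2_op P)"
proof -
  have P: "bounded_op M P" "\<And>f. f \<in> L2 M \<Longrightarrow> 0 \<le> Re (hinner M (P f) f)"
    using assms by (auto simp: positive_op_def self_adjoint_op_def is_hadjoint_def)
  have "0 \<le> inner (ell2_op P $$ analysis (synthesis x)) (analysis (synthesis x))" for x
    using P
    by (simp add: ell2_op_apply_analysis synthesis_L2 bounded_opD(1) inner_analysis[symmetric])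
  then show ?thesis
    using assms
    by (simp add: endo_positive_def endo_selfadjoint_ell2_op positive_op_def analysis_synthesis)
qed

lemma ell2_op_commute_lmult_op:
  assumes T: "bounded_op M T" "mat_adjointable M T"
  shows "ell2_op T * lmult_op A = lmult_op A * ell2_op T"
proof (rule endo_eqI_analysis)
  obtain T' where "bounded_op M T'"
    and adj: "\<And>f g. f \<in> L2 M \<Longrightarrow> g \<in> L2 M \<Longrightarrow> minner M (T f) g = minner M f (T' g)"
    using T(2) unfolding mat_adjointable_def is_hadjoint_def by blast
  fix f :: "'g \<Rightarrow> complex^'r^'s"
  assume f: "f \<in> L2 M"
  have "minner M (T (\<lambda>x. A ** f x)) (E k) = minner M (\<lambda>x. A ** T f x) (E k)" for k
    using f T(1) \<open>bounded_op M T'\<close>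
    by (simp add: adj L2_matrix_mult onb_L2 minner_mult_left bounded_opD(1))
  then have "analysis (T (\<lambda>x. A ** f x)) = ell2_lmult A (analysis (T f))"
    using f T(1) by (intro ell2_eqI)
      (simp add: ell2_seq_analysis ell2_seq_lmult bounded_opD(1) L2_matrix_mult fourier_coeff_def
        fun_eq_iff minner_mult_left onb_L2)
  then show "(ell2_op T * lmult_op A) $$ analysis f = (lmult_op A * ell2_op T) $$ analysis f"
    using f T(1)
    by (simp add: analysis_matrix_mult[symmetric] ell2_op_apply_analysis L2_matrix_mult bounded_opD(1))
qed

lemma ell2_op_square:
  assumes "bounded_op M T" "is_op_sqrt M (T \<circ> T) S"
  shows "ell2_op S * ell2_op S = ell2_op T * ell2_op T"
proof (rule endo_eqI_analysis)
  have S: "bounded_op M S" "\<And>f. f \<in> L2 M \<Longrightarrow> aeq M (S (S f)) (T (T f))"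
    using assms(2)
    by (auto simp: is_op_sqrt_def positive_op_def self_adjoint_op_def is_hadjoint_def)
  fix f :: "'g \<Rightarrow> complex^'r^'s"
  assume "f \<in> L2 M"
  then show "(ell2_op S * ell2_op S) $$ analysis f = (ell2_op T * ell2_op T) $$ analysis f"
    using assms(1) S by (simp add: ell2_op_apply_analysis bounded_opD(1) analysis_aeq)
qed

text \<open>The positive square root of \<open>T\<^sup>2\<close> on \<open>\<ell>\<^sup>2\<close> commutes with matrix multiplication,
  so it is represented by an operator on \<open>L\<^sup>2\<close>; this shows that \<^const>\<open>op_sqrt\<close> is not a junk value.\<close>

lemma is_op_sqrt_op_sqrt:
  fixes T :: "('g \<Rightarrow> complex^'r^'s) \<Rightarrow> ('g \<Rightarrow> complex^'r^'s)"
  assumes "self_adjoint_op M T" "mat_adjointable M T"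
  shows "is_op_sqrt M (T \<circ> T) (op_sqrt M (T \<circ> T))"
proof -
  have T: "bounded_op M T" "\<And>f. f \<in> L2 M \<Longrightarrow> T f \<in> L2 M"
    using assms(1) bounded_opD(1) by (auto simp: self_adjoint_op_def is_hadjoint_def)
  let ?T = "ell2_op T"
  obtain R where R: "endo_positive R" "R * R = ?T * ?T"
    and commute_R: "\<And>U. U * (?T * ?T) = (?T * ?T) * U \<Longrightarrow> U * R = R * U"
    using positive_sqrt_of_square[OF endo_selfadjoint_ell2_op[OF assms(1)]] by blast
  have R_lmult: "R * lmult_op A = lmult_op A * R" for A
    using ell2_op_commute_lmult_op[OF T(1) assms(2), of A] by (metis commute_R mult.assoc)
  define U where "U f = synthesis (R $$ analysis f)" for f :: "'g \<Rightarrow> complex^'r^'s"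
  have U_L2: "\<And>f. f \<in> L2 M \<Longrightarrow> U f \<in> L2 M"
    by (simp add: U_def synthesis_L2)
  have U_rep: "\<And>f. f \<in> L2 M \<Longrightarrow> analysis (U f) = R $$ analysis f"
    by (simp add: U_def analysis_synthesis)
  have hinner_U: "\<And>f g. f \<in> L2 M \<Longrightarrow> g \<in> L2 M \<Longrightarrow> hinner M (U f) g = hinner M f (U g)"
    using R(1) unfolding endo_positive_def
    by (intro hinner_represented[OF U_L2 U_rep R_lmult]) simp_all
  have "is_op_sqrt M (T \<circ> T) U"
    unfolding is_op_sqrt_def positive_op_def self_adjoint_op_def is_hadjoint_def
  proof (intro conjI ballI bounded_op_if_represented[OF U_L2 U_rep R_lmult] hinner_U)
    fix f :: "'g \<Rightarrow> complex^'r^'s"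
    assume f: "f \<in> L2 M"
    then show "Im (hinner M (U f) f) = 0"
      using hinner_U[OF f f] hinner_cnj[OF U_L2[OF f] f]
      by (metis Im_complex_of_real Reals_cnj_iff complex_is_Real_iff)
    show "0 \<le> Re (hinner M (U f) f)"
      using R(1) f by (simp add: inner_analysis U_L2 U_rep endo_positive_def)
    have "analysis (U (U f)) = (R * R) $$ analysis f"
      using f by (simp add: U_rep U_L2)
    also have "\<dots> = analysis (T (T f))"
      using f by (simp add: R(2) ell2_op_apply_analysis T)
    finally have "analysis (U (U f)) = analysis (T (T f))" .
    then show "aeq M (U (U f)) ((T \<circ> T) f)"
      using f by (simp add: aeq_if_analysis_eq U_L2 T(2))
  qed
  then show ?thesis
    unfolding op_sqrt_def by (rule someI[where P = "is_op_sqrt M (T \<circ> T)"])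
qed

lemma analysis_one_plus_half:
  assumes "bounded_op M S" "bounded_op M T" "f \<in> L2 M"
  shows "analysis (\<lambda>x. f x + mscale (1/2) (S f x + T f x))
      = (1 + (1/2) *\<^sub>R (ell2_op S + ell2_op T)) $$ analysis f"
    and "analysis (\<lambda>x. f x + mscale (1/2) (S f x - T f x))
      = (1 + (1/2) *\<^sub>R (ell2_op S - ell2_op T)) $$ analysis f"
  using assms ell2_lmult_of_real[of "1/2"]
  by (simp_all add: analysis_add analysis_diff analysis_mscale ell2_op_apply_analysis
      L2_add L2_diff L2_mscale bounded_opD(1))

lemma mat_riesz_basis_one_plus_half:
  assumes T: "self_adjoint_op M T" "mat_adjointable M T" and S: "is_op_sqrt M (T \<circ> T) S"
  shows "mat_riesz_basis M (\<lambda>k x. E k x + mscale (1/2) (S (E k) x + T (E k) x))"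
    and "mat_riesz_basis M (\<lambda>k x. E k x + mscale (1/2) (S (E k) x - T (E k) x))"
proof -
  have bounded: "bounded_op M T" "bounded_op M S"
    using T(1) S by (auto simp: self_adjoint_op_def positive_op_def is_hadjoint_def is_op_sqrt_def)
  let ?T = "ell2_op T" and ?S = "ell2_op S"
  have "endo_selfadjoint ?T" "endo_positive ?S" "?S * ?S = ?T * ?T"
    using T(1) S bounded(1)
    by (auto intro: endo_selfadjoint_ell2_op endo_positive_ell2_op ell2_op_square simp: is_op_sqrt_def)
  note sqrt = this
  have commute_T: "?T * lmult_op A = lmult_op A * ?T" for A
    by (rule ell2_op_commute_lmult_op[OF bounded(1) T(2)])
  then have commute_S: "?S * lmult_op A = lmult_op A * ?S" for A
    using positive_sqrt_commute[OF sqrt, of "lmult_op A"] by simp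
  have "endo_selfadjoint ?S"
    using sqrt(2) by (simp add: endo_positive_def)
  note facts = sqrt(1) this commute_T commute_S bounded_opD(1)[OF bounded(1)]
    bounded_opD(1)[OF bounded(2)] analysis_one_plus_half[OF bounded(2,1)]
  have "mat_riesz_basis M (\<lambda>k. (\<lambda>f x. f x + mscale (1/2) (S f x + T f x)) (E k))"
    using facts endo_invertible_one_plus_half(1)[OF sqrt]
    by (intro mat_riesz_basis_if_represented[where B = "1 + (1/2) *\<^sub>R (?S + ?T)"])
      (simp_all add: L2_add L2_mscale algebra_simps
        endo_selfadjoint_add endo_selfadjoint_one endo_selfadjoint_scaleR)
  then show "mat_riesz_basis M (\<lambda>k x. E k x + mscale (1/2) (S (E k) x + T (E k) x))"
    by simp
  have "mat_riesz_basis M (\<lambda>k. (\<lambda>f x. f x + mscale (1/2) (S f x - T f x)) (E k))"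
    using facts endo_invertible_one_plus_half(2)[OF sqrt]
    by (intro mat_riesz_basis_if_represented[where B = "1 + (1/2) *\<^sub>R (?S - ?T)"])
      (simp_all add: L2_add L2_diff L2_mscale algebra_simps endo_selfadjoint_add endo_selfadjoint_diff
        endo_selfadjoint_one endo_selfadjoint_scaleR)
  then show "mat_riesz_basis M (\<lambda>k x. E k x + mscale (1/2) (S (E k) x - T (E k) x))"
    by simp
qed

end

theorem theorem3p15:
  fixes M :: "'g::{topological_ab_group_add,t2_space} measure"
    and T :: "('g \<Rightarrow> complex^'r::finite^'s::finite) \<Rightarrow> ('g \<Rightarrow> complex^'r^'s)"
    and E :: "nat \<Rightarrow> 'g \<Rightarrow> complex^'r^'s"
  assumes "sigma_compact_group TYPE('g)"
    and "haar_measure M"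
    and "self_adjoint_op M T"
    and "mat_adjointable M T"
    and "mat_onb M E"
  shows "mat_riesz_basis M
           (\<lambda>k. (\<lambda>x. E k x + mscale (1/2) (op_sqrt M (T \<circ> T) (E k) x + T (E k) x)))
       \<and> mat_riesz_basis M
           (\<lambda>k. (\<lambda>x. E k x + mscale (1/2) (op_sqrt M (T \<circ> T) (E k) x - T (E k) x)))"
proof -
  interpret matrix_onb M E
    by (rule matrix_onb.intro) (fact \<open>mat_onb M E\<close>)
  show ?thesis
    using mat_riesz_basis_one_plus_half[OF assms(3,4) is_op_sqrt_op_sqrt[OF assms(3,4)]] by simp
qed

end
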